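(* There exists a functorial tensor product $\otimes$ on the category of finite-dimensional proper convex cones which is self-dual, i.e. $(G\otimes H)^\vee=G^\vee\otimes H^\vee$ for all proper cones $G,H$, and which lies in between the minimal and maximal tensor product: $G\otimes_{\min}H\subseteq G\otimes H\subseteq G\otimes_{\max}H$ for all proper cones $G,H$.
   Context: A proper cone $(G,X)$ is a closed, convex, sharp cone $G$ with nonempty interior in a finite-dimensional real vector space $X$; a linear map $\varphi\colon X_1\to X_2$ is positive from $G_1$ to $G_2$ if $\varphi(G_1)\subseteq G_2$. The dual cone is $G^\vee=\{\ell\in X'\mid\ell(G)\subseteq[0,\infty)\}$. For proper cones $G\subseteq X$, $H\subseteq Y$: $G\otimes_{\min}H$ is the convex cone in $X\otimes Y$ generated by $\{g\otimes h\mid g\in G,h\in H\}$, and $G\otimes_{\max}H=\{a\in X\otimes Y\mid(\ell\otimes m)(a)\geqslant0\ \forall \ell\in G^\vee,m\in H^\vee\}=(G^\vee\otimes_{\min}H^\vee)^\vee$. A functorial tensor product assigns to every pair of proper cones $G\subseteq X$, $H\subseteq Y$ a proper cone $G\otimes H\subseteq X\otimes Y$ such that $\varphi\otimes\psi$ is positive from $G_1\otimes H_1$ to $G_2\otimes H_2$ whenever $\varphi$ is positive from $G_1$ to $G_2$ and $\psi$ is positive from $H_1$ to $H_2$. Duals are taken in $(X\otimes Y)'=X'\otimes Y'$. *)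

theory Defs
  imports "HOL-Analysis.Analysis"
begin

text \<open>A space is given by a finite index set I; its vectors are the functions
  'i \<Rightarrow> real vanishing outside I (so the space with I = {..<n} is R^n).
  The tensor product of the spaces indexed by I and J is the space indexed by I \<times> J.
  Linear maps are given by matrices, and the dual space is identified with the space
  itself via the standard pairing (dual basis).\<close>

definition space :: "'i set \<Rightarrow> ('i \<Rightarrow> real) set" where
  "space I = {x. \<forall>i. i \<notin> I \<longrightarrow> x i = 0}"

definition pairing :: "'i set \<Rightarrow> ('i \<Rightarrow> real) \<Rightarrow> ('i \<Rightarrow> real) \<Rightarrow> real" where
  "pairing I l x = (\<Sum>i\<in>I. l i * x i)"

definition proper_cone :: "'i set \<Rightarrow> ('i \<Rightarrow> real) set \<Rightarrow> bool" where
  "proper_cone I G \<longleftrightarrow>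
     G \<subseteq> space I \<and>
     closed G \<and>
     (\<forall>x\<in>G. \<forall>c::real. c \<ge> 0 \<longrightarrow> (\<lambda>i. c * x i) \<in> G) \<and>
     (\<forall>x\<in>G. \<forall>y\<in>G. (\<lambda>i. x i + y i) \<in> G) \<and>
     (\<forall>x\<in>G. (\<lambda>i. - x i) \<in> G \<longrightarrow> x = (\<lambda>i. 0)) \<and>
     (\<exists>x\<in>G. \<exists>e>0. \<forall>y\<in>space I. (\<forall>i\<in>I. \<bar>y i - x i\<bar> < e) \<longrightarrow> y \<in> G)"

definition dual_cone :: "'i set \<Rightarrow> ('i \<Rightarrow> real) set \<Rightarrow> ('i \<Rightarrow> real) set" where
  "dual_cone I G = {l \<in> space I. \<forall>g\<in>G. pairing I l g \<ge> 0}"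

definition tensor :: "('i \<Rightarrow> real) \<Rightarrow> ('j \<Rightarrow> real) \<Rightarrow> ('i \<times> 'j \<Rightarrow> real)" where
  "tensor x y = (\<lambda>(i, j). x i * y j)"

text \<open>Convex cone generated by the elementary tensors g \<otimes> h (nonnegative coefficients are
  absorbed since G, H are cones).\<close>
definition min_tensor :: "('i \<Rightarrow> real) set \<Rightarrow> ('j \<Rightarrow> real) set \<Rightarrow> ('i \<times> 'j \<Rightarrow> real) set" where
  "min_tensor G H = {a. \<exists>(k::nat) g h. (\<forall>t<k. g t \<in> G \<and> h t \<in> H) \<and>
                         a = (\<lambda>p. \<Sum>t<k. tensor (g t) (h t) p)}"

definition max_tensor :: "'i set \<Rightarrow> 'j set \<Rightarrow> ('i \<Rightarrow> real) set \<Rightarrow> ('j \<Rightarrow> real) set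
                          \<Rightarrow> ('i \<times> 'j \<Rightarrow> real) set" where
  "max_tensor I J G H = {a \<in> space (I \<times> J).
      \<forall>l\<in>dual_cone I G. \<forall>m\<in>dual_cone J H. pairing (I \<times> J) (tensor l m) a \<ge> 0}"

definition matapp :: "'i set \<Rightarrow> 'k set \<Rightarrow> ('k \<Rightarrow> 'i \<Rightarrow> real) \<Rightarrow> ('i \<Rightarrow> real) \<Rightarrow> ('k \<Rightarrow> real)" where
  "matapp I K M x = (\<lambda>k. if k \<in> K then (\<Sum>i\<in>I. M k i * x i) else 0)"

definition positive_map :: "'i set \<Rightarrow> 'k set \<Rightarrow> ('k \<Rightarrow> 'i \<Rightarrow> real)
                            \<Rightarrow> ('i \<Rightarrow> real) set \<Rightarrow> ('k \<Rightarrow> real) set \<Rightarrow> bool" where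
  "positive_map I K M G1 G2 \<longleftrightarrow> (\<forall>x\<in>G1. matapp I K M x \<in> G2)"

definition mat_tensor :: "('k \<Rightarrow> 'i \<Rightarrow> real) \<Rightarrow> ('l \<Rightarrow> 'j \<Rightarrow> real)
                          \<Rightarrow> ('k \<times> 'l \<Rightarrow> 'i \<times> 'j \<Rightarrow> real)" where
  "mat_tensor M N = (\<lambda>(k, l) (i, j). M k i * N l j)"

end

theory Submission
  imports Defs
begin

text \<open>
  Call a family T(G, H) of wedges, one for each pair of proper cones, admissible if it is
  functorial, contains the minimal tensor product, and T(G, H) pairs nonnegatively with
  T(G*, H*). The minimal tensor product is admissible and the union of a chain of admissible
  families is admissible, so Zorn's lemma yields a maximal admissible family T. The closure of T
  is admissible too, so every T(G, H) is closed, and lying between the minimal and the maximal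
  tensor product it is a proper cone. If T(G, H) were strictly smaller than the dual of
  T(G*, H*), then a point z of the difference just beyond the boundary of T(G, H) satisfies
  \<langle>z, (A \<otimes> B) z\<rangle> \<ge> 0 for all positive A : G \<rightarrow> G*, B : H \<rightarrow> H*. Adding to every T(G', H')
  the cone generated by the images (A \<otimes> B) z under positive maps A : G \<rightarrow> G', B : H \<rightarrow> H' would
  then give a larger admissible family. So T(G, H) is the dual of T(G*, H*), which by the
  bipolar theorem is the self-duality.
\<close>

definition wedge :: "('i \<Rightarrow> real) set \<Rightarrow> bool" where
  "wedge K \<longleftrightarrow> (\<forall>x\<in>K. \<forall>c::real. c \<ge> 0 \<longrightarrow> (\<lambda>i. c * x i) \<in> K) \<and>
     (\<forall>x\<in>K. \<forall>y\<in>K. (\<lambda>i. x i + y i) \<in> K)"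

definition mat_transpose :: "('k \<Rightarrow> 'i \<Rightarrow> real) \<Rightarrow> ('i \<Rightarrow> 'k \<Rightarrow> real)" where
  "mat_transpose M = (\<lambda>i k. M k i)"

definition mat_mult :: "'k set \<Rightarrow> ('l \<Rightarrow> 'k \<Rightarrow> real) \<Rightarrow> ('k \<Rightarrow> 'i \<Rightarrow> real) \<Rightarrow> ('l \<Rightarrow> 'i \<Rightarrow> real)" where
  "mat_mult K N M = (\<lambda>l i. \<Sum>k\<in>K. N l k * M k i)"

text \<open>The rows id_mat i of the identity matrix also serve as the unit vectors.\<close>

definition id_mat :: "'i \<Rightarrow> 'i \<Rightarrow> real" where
  "id_mat = (\<lambda>k i. if k = i then 1 else 0)"

definition norm1 :: "'i set \<Rightarrow> ('i \<Rightarrow> real) \<Rightarrow> real" where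
  "norm1 I x = (\<Sum>i\<in>I. \<bar>x i\<bar>)"

definition cube :: "'i set \<Rightarrow> ('i \<Rightarrow> real) \<Rightarrow> real \<Rightarrow> ('i \<Rightarrow> real) set" where
  "cube I x r = {y \<in> space I. \<forall>i\<in>I. \<bar>y i - x i\<bar> \<le> r}"

lemma wedge_scale: "wedge K \<Longrightarrow> x \<in> K \<Longrightarrow> c \<ge> 0 \<Longrightarrow> (\<lambda>i. c * x i) \<in> K"
  and wedge_add: "wedge K \<Longrightarrow> x \<in> K \<Longrightarrow> y \<in> K \<Longrightarrow> (\<lambda>i. x i + y i) \<in> K"
  by (auto simp: wedge_def)

lemma wedge_zero: "wedge K \<Longrightarrow> K \<noteq> {} \<Longrightarrow> (\<lambda>i. 0) \<in> K"
  using wedge_scale[of K _ 0] by auto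

lemma wedge_sum:
  assumes "wedge K" "K \<noteq> {}" "finite A" "\<And>a. a \<in> A \<Longrightarrow> f a \<in> K"
  shows "(\<lambda>p. \<Sum>a\<in>A. f a p) \<in> K"
  using assms(3,4)
proof (induction A rule: finite_induct)
  case empty
  then show ?case using wedge_zero[OF assms(1,2)] by simp
next
  case (insert a A)
  then have "(\<lambda>p. f a p + (\<Sum>a\<in>A. f a p)) \<in> K"
    by (intro wedge_add[OF assms(1)]) auto
  then show ?case using insert by simp
qed

lemma space_eqI: "x \<in> space I \<Longrightarrow> y \<in> space I \<Longrightarrow> (\<And>i. i \<in> I \<Longrightarrow> x i = y i) \<Longrightarrow> x = y"
  by (auto simp: space_def fun_eq_iff) metis

lemma zero_in_space: "(\<lambda>i. 0) \<in> space I"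
  by (simp add: space_def)

lemma pairing_commute: "pairing I a b = pairing I b a"
  by (simp add: pairing_def mult.commute)

lemma pairing_scale: "pairing I (\<lambda>i. c * x i) y = c * pairing I x y"
  "pairing I y (\<lambda>i. c * x i) = c * pairing I y x"
  by (simp_all add: pairing_def sum_distrib_left ac_simps)

lemma pairing_add: "pairing I (\<lambda>i. x i + z i) y = pairing I x y + pairing I z y"
  "pairing I y (\<lambda>i. x i + z i) = pairing I y x + pairing I y z"
  by (simp_all add: pairing_def sum.distrib distrib_left distrib_right)

lemma pairing_zero: "pairing I (\<lambda>i. 0) x = 0" "pairing I x (\<lambda>i. 0) = 0"
  by (simp_all add: pairing_def)

lemma pairing_id_mat: "finite I \<Longrightarrow> i \<in> I \<Longrightarrow> pairing I l (id_mat i) = l i"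
  by (simp add: pairing_def id_mat_def if_distrib cong: if_cong)

lemma sum_id_mat: "finite A \<Longrightarrow> (\<Sum>c\<in>A. f c * id_mat c p) = (if p \<in> A then f p else 0)"
  by (simp add: id_mat_def if_distrib[of "\<lambda>a. _ * a"] cong: if_cong)

lemma abs_le_norm1: "finite I \<Longrightarrow> i \<in> I \<Longrightarrow> \<bar>x i\<bar> \<le> norm1 I x"
  unfolding norm1_def by (rule member_le_sum) auto

lemma norm1_nonneg: "norm1 I x \<ge> 0"
  by (simp add: norm1_def sum_nonneg)

lemma norm1_eq_0_iff: "finite I \<Longrightarrow> x \<in> space I \<Longrightarrow> norm1 I x = 0 \<longleftrightarrow> x = (\<lambda>i. 0)"
  by (auto simp: norm1_def space_def fun_eq_iff sum_nonneg_eq_0_iff)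

lemma abs_pairing_le: "(\<And>i. i \<in> I \<Longrightarrow> \<bar>a i\<bar> \<le> c) \<Longrightarrow> \<bar>pairing I a b\<bar> \<le> c * norm1 I b"
proof -
  assume a: "\<And>i. i \<in> I \<Longrightarrow> \<bar>a i\<bar> \<le> c"
  have "\<bar>pairing I a b\<bar> \<le> (\<Sum>i\<in>I. \<bar>a i * b i\<bar>)"
    unfolding pairing_def by (rule sum_abs)
  also have "\<dots> \<le> (\<Sum>i\<in>I. c * \<bar>b i\<bar>)"
    using a by (intro sum_mono) (auto simp: abs_mult intro: mult_right_mono)
  finally show ?thesis by (simp add: norm1_def sum_distrib_left)
qed

lemma cube_memI: "y \<in> space I \<Longrightarrow> (\<And>i. i \<in> I \<Longrightarrow> \<bar>y i - x i\<bar> \<le> r) \<Longrightarrow> y \<in> cube I x r"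
  by (simp add: cube_def)

lemma matapp_in_space: "matapp I K M x \<in> space K"
  by (simp add: matapp_def space_def)

lemma matapp_add: "matapp I K M (\<lambda>i. x i + y i) = (\<lambda>k. matapp I K M x k + matapp I K M y k)"
  by (auto simp: matapp_def fun_eq_iff distrib_left sum.distrib)

lemma matapp_scale: "matapp I K M (\<lambda>i. c * x i) = (\<lambda>k. c * matapp I K M x k)"
  by (auto simp: matapp_def fun_eq_iff sum_distrib_left ac_simps)

lemma matapp_zero: "matapp I K M (\<lambda>i. 0) = (\<lambda>k. 0)"
  by (auto simp: matapp_def fun_eq_iff)

lemma matapp_scale_mat: "matapp I K (\<lambda>k i. c * M k i) x = (\<lambda>k. c * matapp I K M x k)"
  by (auto simp: matapp_def fun_eq_iff sum_distrib_left ac_simps)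

lemma matapp_id_mat:
  assumes "finite I" "x \<in> space I" shows "matapp I I id_mat x = x"
proof (rule space_eqI[OF matapp_in_space assms(2)])
  fix i assume "i \<in> I"
  then show "matapp I I id_mat x i = x i"
    using assms(1) by (simp add: matapp_def id_mat_def if_distrib[of "\<lambda>a. a * x _"] cong: if_cong)
qed

lemma matapp_mat_mult:
  assumes "finite I" "finite K"
  shows "matapp K L N (matapp I K M x) = matapp I L (mat_mult K N M) x"
proof
  fix l
  show "matapp K L N (matapp I K M x) l = matapp I L (mat_mult K N M) x l"
  proof (cases "l \<in> L")
    case True
    have "(\<Sum>k\<in>K. N l k * (if k \<in> K then \<Sum>i\<in>I. M k i * x i else 0))
        = (\<Sum>k\<in>K. \<Sum>i\<in>I. N l k * M k i * x i)"
      by (auto intro!: sum.cong simp: sum_distrib_left mult.assoc)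
    also have "\<dots> = (\<Sum>i\<in>I. \<Sum>k\<in>K. N l k * M k i * x i)"
      by (rule sum.swap)
    also have "\<dots> = (\<Sum>i\<in>I. (\<Sum>k\<in>K. N l k * M k i) * x i)"
      by (simp add: sum_distrib_right)
    finally show ?thesis using True by (simp add: matapp_def mat_mult_def)
  qed (simp add: matapp_def)
qed

lemma pairing_matapp:
  "pairing K w (matapp I K M x) = pairing I (matapp K I (mat_transpose M) w) x"
proof -
  have "pairing K w (matapp I K M x) = (\<Sum>k\<in>K. \<Sum>i\<in>I. w k * M k i * x i)"
    by (auto simp: pairing_def matapp_def sum_distrib_left mult.assoc intro!: sum.cong)
  also have "\<dots> = (\<Sum>i\<in>I. \<Sum>k\<in>K. w k * M k i * x i)"
    by (rule sum.swap)
  also have "\<dots> = pairing I (matapp K I (mat_transpose M) w) x"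
    by (auto simp: pairing_def matapp_def mat_transpose_def sum_distrib_right sum_distrib_left
        ac_simps intro!: sum.cong)
  finally show ?thesis .
qed

lemma tensor_in_space: "x \<in> space I \<Longrightarrow> y \<in> space J \<Longrightarrow> tensor x y \<in> space (I \<times> J)"
  by (auto simp: space_def tensor_def)

lemma tensor_id_mat: "tensor (id_mat i) (id_mat j) = id_mat (i, j)"
  by (auto simp: tensor_def id_mat_def fun_eq_iff)

lemma tensor_scale: "(\<lambda>p. c * tensor g h p) = tensor (\<lambda>i. c * g i) h"
  by (auto simp: tensor_def fun_eq_iff)

lemma sum_product_cartesian:
  fixes f g :: "_ \<Rightarrow> real"
  shows "(\<Sum>p\<in>A \<times> B. f (fst p) * g (snd p)) = (\<Sum>a\<in>A. f a) * (\<Sum>b\<in>B. g b)"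
  by (simp add: sum_product sum.cartesian_product split_def)

lemma pairing_tensor:
  "pairing (I \<times> J) (tensor l m) (tensor g h) = pairing I l g * pairing J m h"
  unfolding pairing_def tensor_def sum_product_cartesian[symmetric]
  by (rule sum.cong) (auto simp: ac_simps)

lemma matapp_mat_tensor:
  "matapp (I \<times> J) (K \<times> L) (mat_tensor M N) (tensor g h) = tensor (matapp I K M g) (matapp J L N h)"
proof -
  have "(\<Sum>p\<in>I \<times> J. mat_tensor M N (k, l) p * tensor g h p) =
        (\<Sum>i\<in>I. M k i * g i) * (\<Sum>j\<in>J. N l j * h j)" for k l
    unfolding sum_product_cartesian[symmetric]
    by (rule sum.cong) (auto simp: mat_tensor_def tensor_def ac_simps)
  then show ?thesis
    by (auto simp: fun_eq_iff matapp_def tensor_def)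
qed

lemma mat_transpose_mat_tensor:
  "mat_transpose (mat_tensor M N) = mat_tensor (mat_transpose M) (mat_transpose N)"
  by (auto simp: mat_transpose_def mat_tensor_def fun_eq_iff)

lemma mat_mult_mat_tensor:
  "mat_mult (K \<times> L) (mat_tensor A B) (mat_tensor M N) = mat_tensor (mat_mult K A M) (mat_mult L B N)"
proof -
  have "(\<Sum>p\<in>K \<times> L. mat_tensor A B (a, b) p * mat_tensor M N p (c, d)) =
        (\<Sum>k\<in>K. A a k * M k c) * (\<Sum>l\<in>L. B b l * N l d)" for a b c d
    unfolding sum_product_cartesian[symmetric]
    by (rule sum.cong) (auto simp: mat_tensor_def ac_simps)
  then show ?thesis
    by (auto simp: fun_eq_iff mat_mult_def mat_tensor_def)
qed

lemma mat_tensor_id_mat: "mat_tensor id_mat id_mat = id_mat"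
  by (auto simp: mat_tensor_def id_mat_def fun_eq_iff)

lemma mat_tensor_scale: "mat_tensor (\<lambda>k i. c * A k i) B = (\<lambda>kl ij. c * mat_tensor A B kl ij)"
  by (auto simp: mat_tensor_def fun_eq_iff)

lemma positive_map_mat_mult:
  "finite I \<Longrightarrow> finite K \<Longrightarrow> positive_map I K M G1 G2 \<Longrightarrow> positive_map K L N G2 G3 \<Longrightarrow>
    positive_map I L (mat_mult K N M) G1 G3"
  by (auto simp: positive_map_def matapp_mat_mult[symmetric])

lemma positive_map_id_mat: "finite I \<Longrightarrow> G \<subseteq> space I \<Longrightarrow> positive_map I I id_mat G G"
  by (auto simp: positive_map_def matapp_id_mat)

lemma positive_map_scale:
  "wedge G2 \<Longrightarrow> c \<ge> 0 \<Longrightarrow> positive_map I K A G1 G2 \<Longrightarrow> positive_map I K (\<lambda>k i. c * A k i) G1 G2"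
  by (auto simp: positive_map_def matapp_scale_mat intro: wedge_scale)

lemma positive_map_transpose:
  assumes "positive_map I K M G1 G2"
  shows "positive_map K I (mat_transpose M) (dual_cone K G2) (dual_cone I G1)"
  using assms by (auto simp: positive_map_def dual_cone_def matapp_in_space pairing_matapp[symmetric])

section \<open>Closed wedges and the bipolar theorem\<close>

lemma continuous_on_coordinate [continuous_intros]: "continuous_on S (\<lambda>x::'a \<Rightarrow> real. x i)"
  by (rule continuous_on_subset[OF continuous_on_product_coordinates]) simp

lemma continuous_on_pairing [continuous_intros]:
  "continuous_on S (\<lambda>x. pairing I l x)" "continuous_on S (\<lambda>x. pairing I x l)"
  unfolding pairing_def by (intro continuous_intros)+

lemma continuous_on_matapp [continuous_intros]: "continuous_on S (\<lambda>x. matapp I K M x)"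
  unfolding matapp_def
proof (intro continuous_on_coordinatewise_then_product)
  fix k show "continuous_on S (\<lambda>x. if k \<in> K then \<Sum>i\<in>I. M k i * x i else 0)"
    by (cases "k \<in> K") (auto intro!: continuous_intros)
qed

lemma continuous_on_scale_add [continuous_intros]:
  "continuous_on S (\<lambda>x::'a \<Rightarrow> real. \<lambda>i. c * x i)"
  "continuous_on S (\<lambda>x::'a \<Rightarrow> real. \<lambda>i. x i + y i)"
  "continuous_on S (\<lambda>x::'a \<Rightarrow> real. \<lambda>i. y i + x i)"
  by (intro continuous_on_coordinatewise_then_product continuous_intros)+

lemma closed_space: "closed (space I)"
proof -
  have "space I = (\<Inter>i\<in>-I. {x. x i = 0})" by (auto simp: space_def)
  moreover have "closed {x::'a \<Rightarrow> real. x i = 0}" for i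
    by (intro closed_Collect_eq continuous_intros)
  ultimately show ?thesis by auto
qed

lemma closed_dual_cone: "closed (dual_cone I G)"
proof -
  have "dual_cone I G = space I \<inter> (\<Inter>g\<in>G. {l. 0 \<le> pairing I l g})" by (auto simp: dual_cone_def)
  moreover have "closed {l. 0 \<le> pairing I l g}" for g
    by (intro closed_Collect_le continuous_intros)
  ultimately show ?thesis using closed_space by (auto intro!: closed_Int closed_INT)
qed

lemma compact_box: "compact {x. \<forall>i. (i \<in> I \<longrightarrow> \<bar>x i\<bar> \<le> R i) \<and> (i \<notin> I \<longrightarrow> x i = (0::real))}"
proof -
  have eq: "{x. \<forall>i. (i \<in> I \<longrightarrow> \<bar>x i\<bar> \<le> R i) \<and> (i \<notin> I \<longrightarrow> x i = 0)}
      = PiE UNIV (\<lambda>i. if i \<in> I then {-R i..R i} else {0})"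
    by (auto simp: PiE_def Pi_def abs_le_iff)
  have "compactin (product_topology (\<lambda>i. euclidean) UNIV)
      (PiE UNIV (\<lambda>i. if i \<in> I then {-R i..R i} else {0::real}))"
    by (subst compactin_PiE) auto
  then show ?thesis by (simp add: euclidean_product_topology eq)
qed

lemma wedge_closure:
  assumes K: "wedge K"
  shows "wedge (closure K)"
  unfolding wedge_def
proof (intro conjI ballI allI impI)
  fix x and c :: real assume "x \<in> closure K" "0 \<le> c"
  have "(\<lambda>x i. c * x i) ` K \<subseteq> closure K" using wedge_scale[OF K _ \<open>0 \<le> c\<close>] closure_subset by blast
  then have "(\<lambda>x i. c * x i) ` closure K \<subseteq> closure K"
    by (intro image_closure_subset continuous_intros) auto
  then show "(\<lambda>i. c * x i) \<in> closure K" using \<open>x \<in> closure K\<close> by blast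
next
  have add_closure: "(\<lambda>i. x i + y i) \<in> closure K" if "x \<in> closure K" "y \<in> K" for x y
  proof -
    have "(\<lambda>x i. x i + y i) ` K \<subseteq> closure K" using wedge_add[OF K _ \<open>y \<in> K\<close>] closure_subset by blast
    then have "(\<lambda>x i. x i + y i) ` closure K \<subseteq> closure K"
      by (intro image_closure_subset continuous_intros) auto
    then show ?thesis using \<open>x \<in> closure K\<close> by blast
  qed
  fix x y assume "x \<in> closure K" "y \<in> closure K"
  have "(\<lambda>y i. x i + y i) ` K \<subseteq> closure K" using add_closure[OF \<open>x \<in> closure K\<close>] by blast
  then have "(\<lambda>y i. x i + y i) ` closure K \<subseteq> closure K"
    by (intro image_closure_subset continuous_intros) auto
  then show "(\<lambda>i. x i + y i) \<in> closure K" using \<open>y \<in> closure K\<close> by blast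
qed

lemma dual_cone_subset_space: "dual_cone I G \<subseteq> space I"
  by (auto simp: dual_cone_def)

lemma wedge_dual_cone: "wedge (dual_cone I G)"
  by (auto simp: wedge_def dual_cone_def space_def pairing_scale pairing_add)

lemma zero_in_dual_cone: "(\<lambda>i. 0) \<in> dual_cone I G"
  by (simp add: dual_cone_def space_def pairing_def)

lemma subset_dual_dual_cone: "G \<subseteq> space I \<Longrightarrow> G \<subseteq> dual_cone I (dual_cone I G)"
  by (auto simp: dual_cone_def pairing_commute)

lemma exists_nearest_point:
  assumes fin: "finite I" and K: "K \<subseteq> space I" "closed K" "K \<noteq> {}"
  shows "\<exists>y\<in>K. \<forall>k\<in>K. (\<Sum>i\<in>I. (z i - y i)^2) \<le> (\<Sum>i\<in>I. (z i - k i)^2)"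
proof -
  define f where "f k = (\<Sum>i\<in>I. (z i - k i)^2)" for k
  obtain k0 where k0: "k0 \<in> K" using K(3) by blast
  define D where "D = K \<inter> {k. f k \<le> f k0}"
  define Box where "Box = {x. \<forall>i. (i \<in> I \<longrightarrow> \<bar>x i\<bar> \<le> \<bar>z i\<bar> + sqrt (f k0)) \<and> (i \<notin> I \<longrightarrow> x i = 0)}"
  have contf: "continuous_on S f" for S unfolding f_def by (intro continuous_intros)
  have "D \<subseteq> Box"
  proof
    fix k assume k: "k \<in> D"
    have "\<bar>k i\<bar> \<le> \<bar>z i\<bar> + sqrt (f k0)" if i: "i \<in> I" for i
    proof -
      have "(z i - k i)^2 \<le> f k" unfolding f_def
        by (rule member_le_sum[OF i]) (auto simp: fin)
      also have "\<dots> \<le> f k0" using k by (auto simp: D_def)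
      finally have "sqrt ((z i - k i)^2) \<le> sqrt (f k0)" by (rule real_sqrt_le_mono)
      then show ?thesis by simp
    qed
    then show "k \<in> Box" using k K(1) by (auto simp: Box_def D_def space_def)
  qed
  then have "Box \<inter> D = D" by blast
  moreover have "compact (Box \<inter> D)" unfolding Box_def D_def
    by (intro compact_Int_closed compact_box closed_Int K(2) closed_Collect_le contf continuous_on_const)
  ultimately have cD: "compact D" by simp
  have "D \<noteq> {}" using k0 by (auto simp: D_def)
  from continuous_attains_inf[OF cD this contf]
  obtain y where y: "y \<in> D" and ymin: "\<And>k. k \<in> D \<Longrightarrow> f y \<le> f k"
    by blast
  have "f y \<le> f k" if "k \<in> K" for k
    using ymin[of k] y that by (cases "f k \<le> f k0") (auto simp: D_def)
  then show ?thesis using y unfolding D_def f_def by blast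
qed

lemma nearest_point_wedge_normal:
  assumes K: "wedge K" and y: "y \<in> K"
    and ymin: "\<And>k. k \<in> K \<Longrightarrow> (\<Sum>i\<in>I. (z i - y i)^2) \<le> (\<Sum>i\<in>I. (z i - k i)^2)"
  shows "\<And>k. k \<in> K \<Longrightarrow> (\<Sum>i\<in>I. (z i - y i) * k i) \<le> 0"
    and "(\<Sum>i\<in>I. (z i - y i) * y i) = 0"
proof -
  define a where "a k = (\<Sum>i\<in>I. (z i - y i) * (k i - y i))" for k
  have obtuse: "a k \<le> 0" if k: "k \<in> K" for k
  proof (rule ccontr)
    assume "\<not> a k \<le> 0"
    define b where "b = (\<Sum>i\<in>I. (k i - y i)^2)"
    have b0: "b \<ge> 0" unfolding b_def by (intro sum_nonneg) auto
    define t where "t = min 1 (a k / (b + 1))"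
    have t: "0 < t" "t \<le> 1" using \<open>\<not> a k \<le> 0\<close> b0 by (auto simp: t_def)
    have "(\<lambda>i. (1 - t) * y i + t * k i) \<in> K"
      using t by (intro wedge_add[OF K] wedge_scale[OF K] y k) auto
    have "t * (2 * a k) \<le> t * (t * b)"
    proof -
      have "(z i - ((1 - t) * y i + t * k i))^2
          = (z i - y i)^2 - 2 * t * ((z i - y i) * (k i - y i)) + t^2 * (k i - y i)^2" for i
        by (simp add: power2_eq_square algebra_simps)
      then have "(\<Sum>i\<in>I. (z i - ((1 - t) * y i + t * k i))^2)
          = (\<Sum>i\<in>I. (z i - y i)^2) - 2 * t * a k + t^2 * b"
        by (simp add: a_def b_def sum.distrib sum_subtractf sum_distrib_left mult.assoc)
      with ymin[OF \<open>(\<lambda>i. (1 - t) * y i + t * k i) \<in> K\<close>] show ?thesis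
        by (simp add: power2_eq_square algebra_simps)
    qed
    then have "2 * a k \<le> t * b" using t by simp
    moreover have "t * b \<le> a k / (b + 1) * b" using b0 by (intro mult_right_mono) (auto simp: t_def)
    moreover have "a k / (b + 1) * b \<le> a k"
      using \<open>\<not> a k \<le> 0\<close> b0 by (simp add: field_simps)
    ultimately show False using \<open>\<not> a k \<le> 0\<close> by simp
  qed
  have "a (\<lambda>i. 0) = - (\<Sum>i\<in>I. (z i - y i) * y i)" by (simp add: a_def sum_negf)
  moreover have "a (\<lambda>i. 2 * y i) = (\<Sum>i\<in>I. (z i - y i) * y i)" by (simp add: a_def)
  moreover have "a (\<lambda>i. 0) \<le> 0" "a (\<lambda>i. 2 * y i) \<le> 0"
    using obtuse wedge_scale[OF K y, of 0] wedge_scale[OF K y, of 2] by auto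
  ultimately show yy: "(\<Sum>i\<in>I. (z i - y i) * y i) = 0" by simp
  fix k assume "k \<in> K"
  have "a k = (\<Sum>i\<in>I. (z i - y i) * k i) - (\<Sum>i\<in>I. (z i - y i) * y i)"
    unfolding a_def sum_subtractf[symmetric] by (rule sum.cong) (auto simp: algebra_simps)
  then show "(\<Sum>i\<in>I. (z i - y i) * k i) \<le> 0" using obtuse[OF \<open>k \<in> K\<close>] yy by simp
qed

lemma separation:
  assumes fin: "finite I" and K: "K \<subseteq> space I" "closed K" "wedge K" "K \<noteq> {}"
    and z: "z \<in> space I" "z \<notin> K"
  shows "\<exists>l\<in>dual_cone I K. pairing I l z < 0"
proof -
  obtain y where y: "y \<in> K" and ymin: "\<And>k. k \<in> K \<Longrightarrow> (\<Sum>i\<in>I. (z i - y i)^2) \<le> (\<Sum>i\<in>I. (z i - k i)^2)"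
    using exists_nearest_point[OF fin K(1,2,4)] by blast
  note var = nearest_point_wedge_normal[OF K(3) y ymin]
  define l where "l = (\<lambda>i. y i - z i)"
  have "l \<in> space I" using y z K(1) by (auto simp: l_def space_def)
  moreover have "pairing I l k = - (\<Sum>i\<in>I. (z i - y i) * k i)" for k
    by (simp add: pairing_def l_def sum_negf[symmetric] algebra_simps)
  ultimately have "l \<in> dual_cone I K" using var(1) by (auto simp: dual_cone_def)
  moreover have "(\<Sum>i\<in>I. (z i - y i)^2) > 0"
  proof -
    have "y \<noteq> z" using y z by auto
    then have "\<not> (\<forall>i\<in>I. y i = z i)" using space_eqI[of y I z] y z K(1) by auto
    then obtain i where "i \<in> I" "z i \<noteq> y i" by auto
    then show ?thesis using fin by (intro sum_pos2[of I i]) auto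
  qed
  moreover have "pairing I l z = - (\<Sum>i\<in>I. (z i - y i)^2) - (\<Sum>i\<in>I. (z i - y i) * y i)"
    unfolding pairing_def l_def sum_negf[symmetric] sum_subtractf[symmetric]
    by (rule sum.cong) (auto simp: power2_eq_square algebra_simps)
  ultimately show ?thesis using var(2) by force
qed

lemma dual_dual_cone:
  assumes "finite I" "K \<subseteq> space I" "closed K" "wedge K" "K \<noteq> {}"
  shows "dual_cone I (dual_cone I K) = K"
proof
  show "K \<subseteq> dual_cone I (dual_cone I K)" using subset_dual_dual_cone[OF assms(2)] .
  show "dual_cone I (dual_cone I K) \<subseteq> K"
  proof
    fix z assume z: "z \<in> dual_cone I (dual_cone I K)"
    show "z \<in> K"
    proof (rule ccontr)
      assume "z \<notin> K"
      moreover have "z \<in> space I" using z by (auto simp: dual_cone_def)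
      ultimately obtain l where "l \<in> dual_cone I K" "pairing I l z < 0"
        using separation[OF assms] by blast
      then show False using z by (auto simp: dual_cone_def pairing_commute)
    qed
  qed
qed

lemma proper_coneD:
  assumes "proper_cone I G"
  shows "G \<subseteq> space I" "closed G" "wedge G" "G \<noteq> {}"
  using assms by (auto simp: proper_cone_def wedge_def)

lemma proper_cone_sharp: "proper_cone I G \<Longrightarrow> x \<in> G \<Longrightarrow> (\<lambda>i. - x i) \<in> G \<Longrightarrow> x = (\<lambda>i. 0)"
  by (auto simp: proper_cone_def)

lemma dual_dual_cone_proper:
  assumes "finite I" "proper_cone I G" shows "dual_cone I (dual_cone I G) = G"
  by (rule dual_dual_cone[OF assms(1) proper_coneD[OF assms(2)]])

lemma proper_cone_cube:
  assumes "proper_cone I G"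
  obtains x r where "x \<in> G" "r > 0" "cube I x r \<subseteq> G"
proof -
  obtain x e where "x \<in> G" "e > 0"
    and ball: "\<And>y. y \<in> space I \<Longrightarrow> (\<forall>i\<in>I. \<bar>y i - x i\<bar> < e) \<Longrightarrow> y \<in> G"
    using assms unfolding proper_cone_def by blast
  moreover have "cube I x (e / 2) \<subseteq> G"
    using \<open>e > 0\<close> by (auto simp: cube_def intro!: ball)
  ultimately show thesis using that[of x "e / 2"] by simp
qed

lemma proper_coneI_cube:
  assumes "G \<subseteq> space I" "closed G" "wedge G"
    and "\<And>x. x \<in> G \<Longrightarrow> (\<lambda>i. - x i) \<in> G \<Longrightarrow> x = (\<lambda>i. 0)"
    and "x \<in> G" "r > 0" "cube I x r \<subseteq> G"
  shows "proper_cone I G"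
proof -
  have "y \<in> G" if "y \<in> space I" "\<forall>i\<in>I. \<bar>y i - x i\<bar> < r" for y
    using assms(7) that by (auto simp: cube_def less_imp_le)
  then show ?thesis
    using assms(1-6) unfolding proper_cone_def wedge_def by blast
qed

lemma norm1_le_pairing:
  assumes p: "p \<in> space I" and r: "r \<ge> 0" and cube: "cube I p r \<subseteq> S"
    and k: "\<And>s. s \<in> S \<Longrightarrow> 0 \<le> pairing I s k"
  shows "r * norm1 I k \<le> pairing I p k"
proof -
  define u where "u = (\<lambda>i. if i \<in> I then - r * sgn (k i) else 0)"
  have "(\<lambda>i. p i + u i) \<in> cube I p r"
    using p r by (intro cube_memI) (auto simp: u_def space_def abs_mult abs_sgn_eq)
  with cube have "0 \<le> pairing I (\<lambda>i. p i + u i) k" by (auto intro: k)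
  moreover have "pairing I u k = - r * norm1 I k"
    unfolding pairing_def norm1_def u_def sum_distrib_left
    by (rule sum.cong) (auto simp: abs_sgn ac_simps)
  ultimately show ?thesis by (simp add: pairing_add)
qed

lemma dual_cone_sharp:
  assumes fin: "finite I" and G: "proper_cone I G"
    and l: "l \<in> dual_cone I G" and ml: "(\<lambda>i. - l i) \<in> dual_cone I G"
  shows "l = (\<lambda>i. 0)"
proof (rule space_eqI[OF _ zero_in_space])
  show "l \<in> space I" using l by (auto simp: dual_cone_def)
  obtain x r where x: "x \<in> G" "r > 0" "cube I x r \<subseteq> G"
    using proper_cone_cube[OF G] .
  have zero: "pairing I l g = 0" if "g \<in> G" for g
    using l ml that pairing_scale(1)[of I "-1" l g] by (force simp: dual_cone_def)
  fix i assume i: "i \<in> I"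
  have "(\<lambda>j. x j + r * id_mat i j) \<in> cube I x r"
    using x proper_coneD(1)[OF G] \<open>r > 0\<close> i
    by (intro cube_memI) (auto simp: space_def id_mat_def)
  then have "pairing I l (\<lambda>j. x j + r * id_mat i j) = 0" using x(3) zero by blast
  then show "l i = 0"
    using zero[OF x(1)] \<open>r > 0\<close> by (simp add: pairing_add pairing_scale pairing_id_mat[OF fin i])
qed

lemma compact_norm1_sphere:
  assumes fin: "finite I" and G: "G \<subseteq> space I" "closed G"
  shows "compact (G \<inter> {g. norm1 I g = 1})"
proof -
  define Box where "Box = {x. \<forall>i. (i \<in> I \<longrightarrow> \<bar>x i\<bar> \<le> 1) \<and> (i \<notin> I \<longrightarrow> x i = (0::real))}"
  have "G \<inter> {g. norm1 I g = 1} \<subseteq> Box"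
  proof
    fix g assume "g \<in> G \<inter> {g. norm1 I g = 1}"
    then show "g \<in> Box"
      using G(1) abs_le_norm1[OF fin, of _ g] by (auto simp: Box_def space_def)
  qed
  then have "Box \<inter> (G \<inter> {g. norm1 I g = 1}) = G \<inter> {g. norm1 I g = 1}" by blast
  moreover have "compact (Box \<inter> (G \<inter> {g. norm1 I g = 1}))" unfolding Box_def norm1_def
    by (intro compact_Int_closed compact_box closed_Int G(2) closed_Collect_eq continuous_intros)
  ultimately show ?thesis by simp
qed

lemma exists_dual_cone_positive:
  assumes fin: "finite I" and G: "proper_cone I G" and g: "g \<in> G" "g \<noteq> (\<lambda>i. 0)"
  shows "\<exists>l\<in>dual_cone I G. 0 < pairing I l g"
proof (rule ccontr)
  assume "\<not> (\<exists>l\<in>dual_cone I G. 0 < pairing I l g)"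
  moreover have "pairing I (\<lambda>i. - g i) l = - pairing I l g" for l
    using pairing_scale(1)[of I "-1" g l] by (simp add: pairing_commute)
  moreover have "(\<lambda>i. - g i) \<in> space I" using g proper_coneD(1)[OF G] by (auto simp: space_def)
  ultimately have "(\<lambda>i. - g i) \<in> dual_cone I (dual_cone I G)"
    by (force simp: dual_cone_def)
  then have "(\<lambda>i. - g i) \<in> G" using dual_dual_cone_proper[OF fin G] by simp
  then show False using proper_cone_sharp[OF G g(1)] g(2) by simp
qed

text \<open>By compactness, finitely many such functionals suffice; their sum is positive on S.\<close>

lemma exists_dual_cone_positive_on_compact:
  assumes S: "compact S" "S \<subseteq> G" and pos: "\<And>g. g \<in> S \<Longrightarrow> \<exists>l\<in>dual_cone I G. 0 < pairing I l g"
  obtains l where "l \<in> dual_cone I G" "\<And>g. g \<in> S \<Longrightarrow> 0 < pairing I l g"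
proof -
  have "open {g. 0 < pairing I l g}" for l
    by (rule open_Collect_less[OF continuous_on_const continuous_on_pairing(1)])
  moreover have "S \<subseteq> (\<Union>l\<in>dual_cone I G. {g. 0 < pairing I l g})" using pos by blast
  ultimately obtain C where C: "C \<subseteq> dual_cone I G" "finite C" "S \<subseteq> (\<Union>l\<in>C. {g. 0 < pairing I l g})"
    using compactE_image[OF S(1)] by metis
  define l0 where "l0 = (\<lambda>i. \<Sum>l\<in>C. l i)"
  have pl0: "pairing I l0 g = (\<Sum>l\<in>C. pairing I l g)" for g
    unfolding l0_def pairing_def sum_distrib_right by (rule sum.swap)
  have "l0 \<in> dual_cone I G"
    unfolding l0_def using C(1) zero_in_dual_cone
    by (intro wedge_sum[OF wedge_dual_cone _ C(2)]) auto
  moreover have "0 < pairing I l0 g" if g: "g \<in> S" for g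
  proof -
    obtain l where "l \<in> C" "0 < pairing I l g" using C(3) g by blast
    moreover have "\<forall>l'\<in>C. 0 \<le> pairing I l' g" using C(1) g S(2) by (auto simp: dual_cone_def)
    ultimately show ?thesis unfolding pl0 by (intro sum_pos2[OF C(2)]) auto
  qed
  ultimately show thesis by (rule that)
qed

lemma exists_strictly_positive_functional:
  assumes fin: "finite I" and G: "proper_cone I G"
  obtains l c where "l \<in> dual_cone I G" "c > 0" "\<And>g. g \<in> G \<Longrightarrow> c * norm1 I g \<le> pairing I l g"
proof -
  define S where "S = G \<inter> {g. norm1 I g = 1}"
  have cS: "compact S" unfolding S_def by (rule compact_norm1_sphere[OF fin proper_coneD(1,2)[OF G]])
  have "\<exists>l\<in>dual_cone I G. 0 < pairing I l g" if "g \<in> S" for g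
    using that by (intro exists_dual_cone_positive[OF fin G]) (auto simp: S_def norm1_def)
  with exists_dual_cone_positive_on_compact[OF cS]
  obtain l where l: "l \<in> dual_cone I G" "\<And>g. g \<in> S \<Longrightarrow> 0 < pairing I l g"
    unfolding S_def by blast
  obtain c where c: "c > 0" "\<And>g. g \<in> S \<Longrightarrow> c \<le> pairing I l g"
  proof (cases "S = {}")
    case False
    then obtain g0 where "g0 \<in> S" "\<forall>g\<in>S. pairing I l g0 \<le> pairing I l g"
      using continuous_attains_inf[OF cS False continuous_on_pairing(1)] by blast
    then show ?thesis using that[of "pairing I l g0"] l(2) by auto
  qed (use that[of 1] in auto)
  have "c * norm1 I g \<le> pairing I l g" if g: "g \<in> G" for g
  proof (cases "norm1 I g = 0")
    case True then show ?thesis using l(1) g by (auto simp: dual_cone_def)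
  next
    case False
    then have N: "norm1 I g > 0" using norm1_nonneg[of I g] by simp
    have "(\<lambda>i. (1 / norm1 I g) * g i) \<in> S"
      using wedge_scale[OF proper_coneD(3)[OF G] g, of "1 / norm1 I g"] N
      by (simp add: S_def norm1_def abs_mult flip: sum_divide_distrib)
    from c(2)[OF this] N show ?thesis unfolding pairing_scale by (simp add: field_simps)
  qed
  then show thesis using that l(1) c(1) by blast
qed

lemma cube_subset_dual_cone:
  assumes l: "l \<in> space I" and pos: "\<And>g. g \<in> G \<Longrightarrow> c * norm1 I g \<le> pairing I l g"
  shows "cube I l c \<subseteq> dual_cone I G"
proof
  fix y assume y: "y \<in> cube I l c"
  have "0 \<le> pairing I y g" if g: "g \<in> G" for g
  proof -
    have "pairing I y g = pairing I l g + pairing I (\<lambda>i. y i - l i) g"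
      by (simp add: pairing_def algebra_simps sum.distrib[symmetric])
    moreover have "\<bar>pairing I (\<lambda>i. y i - l i) g\<bar> \<le> c * norm1 I g"
      using y by (intro abs_pairing_le) (auto simp: cube_def)
    ultimately show ?thesis using pos[OF g] by linarith
  qed
  then show "y \<in> dual_cone I G" using y by (auto simp: dual_cone_def cube_def)
qed

lemma dual_cone_proper:
  assumes fin: "finite I" and G: "proper_cone I G"
  shows "proper_cone I (dual_cone I G)"
proof -
  obtain l c where "l \<in> dual_cone I G" "c > 0" "\<And>g. g \<in> G \<Longrightarrow> c * norm1 I g \<le> pairing I l g"
    using exists_strictly_positive_functional[OF assms] by blast
  then show ?thesis
    using dual_cone_sharp[OF assms] cube_subset_dual_cone[of l I G c]
    by (intro proper_coneI_cube[of _ _ l c] dual_cone_subset_space closed_dual_cone wedge_dual_cone)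
      (auto simp: dual_cone_def)
qed

section \<open>The minimal tensor product\<close>

definition finite_sums :: "('a \<Rightarrow> real) set \<Rightarrow> ('a \<Rightarrow> real) set" where
  "finite_sums S = {(\<lambda>p. \<Sum>x\<leftarrow>xs. x p) | xs. set xs \<subseteq> S}"

lemma finite_sumsI: "set xs \<subseteq> S \<Longrightarrow> (\<lambda>p. \<Sum>x\<leftarrow>xs. x p) \<in> finite_sums S"
  by (auto simp: finite_sums_def)

lemma finite_sumsE:
  assumes "y \<in> finite_sums S"
  obtains xs where "set xs \<subseteq> S" "y = (\<lambda>p. \<Sum>x\<leftarrow>xs. x p)"
  using assms by (auto simp: finite_sums_def)

lemma zero_in_finite_sums: "(\<lambda>p. 0) \<in> finite_sums S"
  using finite_sumsI[of "[]"] by simp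

lemma subset_finite_sums: "S \<subseteq> finite_sums S"
  using finite_sumsI[of "[_]"] by auto

lemma finite_sums_mono: "S \<subseteq> T \<Longrightarrow> finite_sums S \<subseteq> finite_sums T"
  by (auto simp: finite_sums_def)

lemma finite_sums_add: "x \<in> finite_sums S \<Longrightarrow> y \<in> finite_sums S \<Longrightarrow> (\<lambda>p. x p + y p) \<in> finite_sums S"
  by (elim finite_sumsE) (auto intro!: finite_sumsI[of "_ @ _", simplified])

lemma wedge_finite_sums:
  assumes "\<And>x c. x \<in> S \<Longrightarrow> c \<ge> 0 \<Longrightarrow> (\<lambda>i. c * x i) \<in> S"
  shows "wedge (finite_sums S)"
  unfolding wedge_def
proof (intro conjI ballI allI impI finite_sums_add)
  fix y and c :: real assume "y \<in> finite_sums S" "0 \<le> c"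
  from \<open>y \<in> finite_sums S\<close> obtain xs where "set xs \<subseteq> S" "y = (\<lambda>p. \<Sum>x\<leftarrow>xs. x p)"
    by (rule finite_sumsE)
  moreover have "set (map (\<lambda>x i. c * x i) xs) \<subseteq> S" using calculation(1) assms \<open>0 \<le> c\<close> by auto
  ultimately show "(\<lambda>i. c * y i) \<in> finite_sums S"
    using finite_sumsI[of "map (\<lambda>x i. c * x i) xs"] by (simp add: o_def sum_list_const_mult)
qed

lemma sum_list_in_space: "set xs \<subseteq> space I \<Longrightarrow> (\<lambda>p. \<Sum>x\<leftarrow>xs. x p) \<in> space I"
  by (induction xs) (auto simp: space_def)

lemma finite_sums_subset_space: "S \<subseteq> space I \<Longrightarrow> finite_sums S \<subseteq> space I"
  by (auto elim!: finite_sumsE intro!: sum_list_in_space)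

lemma matapp_sum_list: "matapp I K M (\<lambda>p. \<Sum>x\<leftarrow>xs. x p) = (\<lambda>k. \<Sum>x\<leftarrow>xs. matapp I K M x k)"
  by (induction xs) (simp_all add: matapp_zero matapp_add)

lemma matapp_finite_sums: "x \<in> finite_sums S \<Longrightarrow> matapp I K M x \<in> finite_sums (matapp I K M ` S)"
proof (elim finite_sumsE)
  fix xs assume "set xs \<subseteq> S" "x = (\<lambda>p. \<Sum>x\<leftarrow>xs. x p)"
  then show ?thesis
    using finite_sumsI[of "map (matapp I K M) xs" "matapp I K M ` S"] by (auto simp: matapp_sum_list o_def)
qed

lemma pairing_sum_list:
  "pairing I (\<lambda>p. \<Sum>x\<leftarrow>xs. x p) y = (\<Sum>x\<leftarrow>xs. pairing I x y)"
  "pairing I y (\<lambda>p. \<Sum>x\<leftarrow>xs. x p) = (\<Sum>x\<leftarrow>xs. pairing I y x)"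
  by (induction xs) (simp_all add: pairing_zero pairing_add)

lemma pairing_finite_sums_nonneg:
  assumes "\<And>x y. x \<in> S \<Longrightarrow> y \<in> T \<Longrightarrow> 0 \<le> pairing I x y"
    and "x \<in> finite_sums S" "y \<in> finite_sums T"
  shows "0 \<le> pairing I x y"
  using assms(2,3)
proof (elim finite_sumsE)
  fix xs ys assume "set xs \<subseteq> S" "x = (\<lambda>p. \<Sum>x\<leftarrow>xs. x p)" "set ys \<subseteq> T" "y = (\<lambda>p. \<Sum>y\<leftarrow>ys. y p)"
  moreover have "0 \<le> pairing I a b" if "a \<in> set xs" "b \<in> set ys" for a b
    using that calculation assms(1) by blast
  ultimately show ?thesis by (auto simp: pairing_sum_list intro!: sum_list_nonneg)
qed

definition elementary_tensors :: "('i \<Rightarrow> real) set \<Rightarrow> ('j \<Rightarrow> real) set \<Rightarrow> ('i \<times> 'j \<Rightarrow> real) set" where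
  "elementary_tensors G H = {tensor g h | g h. g \<in> G \<and> h \<in> H}"

lemma elementary_tensorsI: "g \<in> G \<Longrightarrow> h \<in> H \<Longrightarrow> tensor g h \<in> elementary_tensors G H"
  by (auto simp: elementary_tensors_def)

lemma elementary_tensorsE:
  "x \<in> elementary_tensors G H \<Longrightarrow> (\<And>g h. g \<in> G \<Longrightarrow> h \<in> H \<Longrightarrow> x = tensor g h \<Longrightarrow> P) \<Longrightarrow> P"
  by (auto simp: elementary_tensors_def)

lemma sum_list_conv_sum_nth: "(\<Sum>x\<leftarrow>xs. f x) = (\<Sum>t<length xs. f (xs ! t))"
proof -
  have "(\<Sum>x\<leftarrow>xs. f x) = (\<Sum>t = 0..<length (map f xs). map f xs ! t)"
    by (rule sum_list_sum_nth)
  also have "\<dots> = (\<Sum>t<length xs. f (xs ! t))"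
    by (auto simp: atLeast0LessThan intro!: sum.cong)
  finally show ?thesis .
qed

lemma tensor_in_min_tensor: "g \<in> G \<Longrightarrow> h \<in> H \<Longrightarrow> tensor g h \<in> min_tensor G H"
  unfolding min_tensor_def by (intro CollectI exI[of _ 1] exI[of _ "\<lambda>_. g"] exI[of _ "\<lambda>_. h"]) auto

lemma min_tensor_eq_finite_sums: "min_tensor G H = finite_sums (elementary_tensors G H)"
proof
  show "min_tensor G H \<subseteq> finite_sums (elementary_tensors G H)"
  proof
    fix a assume "a \<in> min_tensor G H"
    then obtain k :: nat and g h where gh: "\<forall>t<k. g t \<in> G \<and> h t \<in> H"
      and a: "a = (\<lambda>p. \<Sum>t<k. tensor (g t) (h t) p)"
      unfolding min_tensor_def by blast
    define xs where "xs = map (\<lambda>t. tensor (g t) (h t)) [0..<k]"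
    have "set xs \<subseteq> elementary_tensors G H"
      using gh by (auto simp: xs_def intro: elementary_tensorsI)
    moreover have "a = (\<lambda>p. \<Sum>x\<leftarrow>xs. x p)"
      by (simp add: a xs_def o_def sum_list_sum_nth atLeast0LessThan)
    ultimately show "a \<in> finite_sums (elementary_tensors G H)"
      using finite_sumsI by simp
  qed
  show "finite_sums (elementary_tensors G H) \<subseteq> min_tensor G H"
  proof
    fix a assume "a \<in> finite_sums (elementary_tensors G H)"
    then obtain xs where xs: "set xs \<subseteq> elementary_tensors G H"
      and a: "a = (\<lambda>p. \<Sum>x\<leftarrow>xs. x p)" by (rule finite_sumsE)
    obtain g h where gh: "\<And>t. t < length xs \<Longrightarrow> g t \<in> G \<and> h t \<in> H \<and> xs ! t = tensor (g t) (h t)"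
    proof -
      have "\<forall>t. \<exists>gh. t < length xs \<longrightarrow> fst gh \<in> G \<and> snd gh \<in> H \<and> xs ! t = tensor (fst gh) (snd gh)"
      proof
        fix t show "\<exists>gh. t < length xs \<longrightarrow> fst gh \<in> G \<and> snd gh \<in> H \<and> xs ! t = tensor (fst gh) (snd gh)"
        proof (cases "t < length xs")
          case True
          then have "xs ! t \<in> elementary_tensors G H" using xs by auto
          then obtain g h where "g \<in> G" "h \<in> H" "xs ! t = tensor g h" by (rule elementary_tensorsE)
          then show ?thesis by (intro exI[of _ "(g, h)"]) simp
        qed simp
      qed
      from choice[OF this] obtain gh where "\<forall>t. t < length xs \<longrightarrow>
          fst (gh t) \<in> G \<and> snd (gh t) \<in> H \<and> xs ! t = tensor (fst (gh t)) (snd (gh t))" ..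
      then show thesis using that[of "\<lambda>t. fst (gh t)" "\<lambda>t. snd (gh t)"] by blast
    qed
    have "a = (\<lambda>p. \<Sum>t<length xs. tensor (g t) (h t) p)"
      unfolding a sum_list_conv_sum_nth using gh by (auto intro!: sum.cong)
    then show "a \<in> min_tensor G H"
      unfolding min_tensor_def using gh by blast
  qed
qed

lemma wedge_min_tensor:
  assumes "wedge G" shows "wedge (min_tensor G H)"
  unfolding min_tensor_eq_finite_sums
proof (rule wedge_finite_sums)
  fix x and c :: real assume "x \<in> elementary_tensors G H" "c \<ge> 0"
  then show "(\<lambda>i. c * x i) \<in> elementary_tensors G H"
    by (auto elim!: elementary_tensorsE simp: tensor_scale intro!: elementary_tensorsI wedge_scale[OF assms])
qed

lemma min_tensor_subset_space:
  "G \<subseteq> space I \<Longrightarrow> H \<subseteq> space J \<Longrightarrow> min_tensor G H \<subseteq> space (I \<times> J)"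
  unfolding min_tensor_eq_finite_sums
  by (rule finite_sums_subset_space) (auto elim!: elementary_tensorsE intro: tensor_in_space)

lemma positive_map_min_tensor:
  assumes "positive_map I K A G1 G2" "positive_map J L B H1 H2"
  shows "positive_map (I \<times> J) (K \<times> L) (mat_tensor A B) (min_tensor G1 H1) (min_tensor G2 H2)"
proof -
  have "matapp (I \<times> J) (K \<times> L) (mat_tensor A B) ` elementary_tensors G1 H1 \<subseteq> elementary_tensors G2 H2"
    using assms
    by (auto elim!: elementary_tensorsE intro!: elementary_tensorsI simp: matapp_mat_tensor positive_map_def)
  then have "finite_sums (matapp (I \<times> J) (K \<times> L) (mat_tensor A B) ` elementary_tensors G1 H1)
      \<subseteq> finite_sums (elementary_tensors G2 H2)"
    by (rule finite_sums_mono)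
  then show ?thesis
    unfolding positive_map_def min_tensor_eq_finite_sums using matapp_finite_sums by blast
qed

lemma min_tensor_pairing_nonneg:
  assumes "\<And>g h. g \<in> G \<Longrightarrow> h \<in> H \<Longrightarrow> 0 \<le> pairing (I \<times> J) (tensor g h) k"
    and "x \<in> min_tensor G H"
  shows "0 \<le> pairing (I \<times> J) x k"
proof (rule pairing_finite_sums_nonneg)
  show "x \<in> finite_sums (elementary_tensors G H)"
    using assms(2) by (simp add: min_tensor_eq_finite_sums)
  show "k \<in> finite_sums {k}" using subset_finite_sums by blast
  show "0 \<le> pairing (I \<times> J) y k'" if "y \<in> elementary_tensors G H" "k' \<in> {k}" for y k'
    using that by (auto elim!: elementary_tensorsE intro: assms(1))
qed

lemma pairing_min_tensor_dual_nonneg: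
  assumes "x \<in> min_tensor G H" "w \<in> min_tensor (dual_cone I G) (dual_cone J H)"
  shows "0 \<le> pairing (I \<times> J) w x"
proof (rule min_tensor_pairing_nonneg[OF _ assms(2)])
  fix l m assume lm: "l \<in> dual_cone I G" "m \<in> dual_cone J H"
  have "0 \<le> pairing (I \<times> J) x (tensor l m)"
  proof (rule min_tensor_pairing_nonneg[OF _ assms(1)])
    fix g h assume "g \<in> G" "h \<in> H"
    then have "0 \<le> pairing I l g" "0 \<le> pairing J m h" using lm by (auto simp: dual_cone_def)
    then show "0 \<le> pairing (I \<times> J) (tensor g h) (tensor l m)"
      by (simp add: pairing_tensor pairing_commute[of _ g] pairing_commute[of _ h])
  qed
  then show "0 \<le> pairing (I \<times> J) (tensor l m) x" by (simp only: pairing_commute)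
qed

text \<open>(card C + 1) y is the sum of t and of one point on each coordinate segment through t.\<close>

lemma cube_subset_wedge:
  assumes fin: "finite C" and P: "wedge P" and t: "t \<in> P" "t \<in> space C"
    and axes: "\<And>c w. c \<in> C \<Longrightarrow> \<bar>w\<bar> \<le> \<rho> \<Longrightarrow> (\<lambda>p. t p + w * id_mat c p) \<in> P"
  shows "cube C t (\<rho> / (card C + 1)) \<subseteq> P"
proof
  fix y assume y: "y \<in> cube C t (\<rho> / (card C + 1))"
  define N where "N = real (card C)"
  define u where "u c = (N + 1) * (y c - t c)" for c
  have N: "N + 1 > 0" by (simp add: N_def add_nonneg_pos)
  have "\<bar>u c\<bar> \<le> \<rho>" if "c \<in> C" for c
  proof -
    have "\<bar>u c\<bar> = (N + 1) * \<bar>y c - t c\<bar>" using N by (simp add: u_def abs_mult)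
    also have "\<dots> \<le> (N + 1) * (\<rho> / (N + 1))"
      using y that N by (intro mult_left_mono) (auto simp: cube_def N_def add.commute)
    finally show ?thesis using N by simp
  qed
  then have "(\<lambda>p. \<Sum>c\<in>C. t p + u c * id_mat c p) \<in> P"
    using t(1) by (intro wedge_sum[OF P _ fin] axes) auto
  then have "(\<lambda>p. (\<Sum>c\<in>C. t p + u c * id_mat c p) + t p) \<in> P"
    by (rule wedge_add[OF P _ t(1)])
  moreover have "(\<Sum>c\<in>C. t p + u c * id_mat c p) + t p = (N + 1) * y p" for p
  proof -
    have "(\<Sum>c\<in>C. t p + u c * id_mat c p) = N * t p + (if p \<in> C then u p else 0)"
      by (simp add: sum.distrib sum_id_mat[OF fin] N_def)
    then show ?thesis
      using y t(2) by (auto simp: u_def cube_def space_def algebra_simps)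
  qed
  ultimately have "(\<lambda>p. (N + 1) * y p) \<in> P" by simp
  from wedge_scale[OF P this, of "1 / (N + 1)"] N show "y \<in> P" by simp
qed

lemma min_tensor_interior:
  assumes fin: "finite I" "finite J" and G: "proper_cone I G" and H: "proper_cone J H"
  obtains t r where "t \<in> min_tensor G H" "r > 0" "cube (I \<times> J) t r \<subseteq> min_tensor G H"
proof -
  obtain g0 dG where g0: "g0 \<in> G" "dG > 0" "cube I g0 dG \<subseteq> G"
    using proper_cone_cube[OF G] by blast
  obtain h0 dH where h0: "h0 \<in> H" "dH > 0" "cube J h0 dH \<subseteq> H"
    using proper_cone_cube[OF H] by blast
  define d where "d = min dG dH"
  have d: "d > 0" using g0 h0 by (simp add: d_def)
  have gin: "(\<lambda>i'. g0 i' + a * id_mat i i') \<in> G" if "\<bar>a\<bar> \<le> d" "i \<in> I" for a i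
    using that g0 proper_coneD(1)[OF G]
    by (intro subsetD[OF g0(3)] cube_memI) (auto simp: space_def id_mat_def d_def)
  have hin: "(\<lambda>j'. h0 j' + b * id_mat j j') \<in> H" if "\<bar>b\<bar> \<le> d" "j \<in> J" for b j
    using that h0 proper_coneD(1)[OF H]
    by (intro subsetD[OF h0(3)] cube_memI) (auto simp: space_def id_mat_def d_def)
  define t where "t = tensor g0 h0"
  have tmin: "t \<in> min_tensor G H" unfolding t_def by (rule tensor_in_min_tensor[OF g0(1) h0(1)])
  have axes: "(\<lambda>p. t p + w * id_mat c p) \<in> min_tensor G H" if c: "c \<in> I \<times> J" and w: "\<bar>w\<bar> \<le> d^2" for c w
  proof -
    obtain i j where ij: "c = (i, j)" "i \<in> I" "j \<in> J" using c by auto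
    define b where "b = w / d"
    have b: "\<bar>b\<bar> \<le> d" using w d by (simp add: b_def abs_divide divide_le_eq power2_eq_square)
    define Tp where "Tp = tensor (\<lambda>i'. g0 i' + d * id_mat i i') (\<lambda>j'. h0 j' + b * id_mat j j')"
    define Tm where "Tm = tensor (\<lambda>i'. g0 i' + (-d) * id_mat i i') (\<lambda>j'. h0 j' + (-b) * id_mat j j')"
    have "Tp \<in> min_tensor G H" "Tm \<in> min_tensor G H"
      unfolding Tp_def Tm_def using ij b d by (intro tensor_in_min_tensor gin hin; simp)+
    then have "(\<lambda>p. (1/2) * Tp p + (1/2) * Tm p) \<in> min_tensor G H"
      using wedge_min_tensor[OF proper_coneD(3)[OF G]] by (intro wedge_add wedge_scale) auto
    moreover have "(\<lambda>p. (1/2) * Tp p + (1/2) * Tm p) = (\<lambda>p. t p + (d * b) * tensor (id_mat i) (id_mat j) p)"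
      unfolding Tp_def Tm_def t_def tensor_def by (simp add: split_def algebra_simps)
    moreover have "d * b = w" using d by (simp add: b_def)
    ultimately show ?thesis by (simp add: tensor_id_mat ij)
  qed
  have "cube (I \<times> J) t (d^2 / (card (I \<times> J) + 1)) \<subseteq> min_tensor G H"
    using fin tmin min_tensor_subset_space[OF proper_coneD(1)[OF G] proper_coneD(1)[OF H]] axes
    by (intro cube_subset_wedge wedge_min_tensor proper_coneD(3)[OF G]) auto
  moreover have "d^2 / (card (I \<times> J) + 1) > 0" using d by (simp add: add_nonneg_pos)
  ultimately show thesis using that[OF tmin] by blast
qed

lemma max_tensor_sharp:
  assumes fin: "finite I" "finite J" and G: "proper_cone I G" and H: "proper_cone J H"
    and x: "x \<in> max_tensor I J G H" "(\<lambda>p. - x p) \<in> max_tensor I J G H"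
  shows "x = (\<lambda>p. 0)"
proof -
  obtain t r where t: "t \<in> min_tensor (dual_cone I G) (dual_cone J H)" "r > 0"
      "cube (I \<times> J) t r \<subseteq> min_tensor (dual_cone I G) (dual_cone J H)"
    using min_tensor_interior[OF fin dual_cone_proper[OF fin(1) G] dual_cone_proper[OF fin(2) H]] .
  have tsp: "t \<in> space (I \<times> J)"
    using t(1) min_tensor_subset_space[OF dual_cone_subset_space dual_cone_subset_space] by blast
  have bound: "r * norm1 (I \<times> J) k \<le> pairing (I \<times> J) t k" if k: "k \<in> max_tensor I J G H" for k
  proof (rule norm1_le_pairing[OF tsp _ t(3)])
    show "0 \<le> r" using t(2) by simp
    fix s assume "s \<in> min_tensor (dual_cone I G) (dual_cone J H)"
    then show "0 \<le> pairing (I \<times> J) s k"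
      by (rule min_tensor_pairing_nonneg[rotated]) (use k in \<open>auto simp: max_tensor_def\<close>)
  qed
  have "pairing (I \<times> J) t (\<lambda>p. - x p) = - pairing (I \<times> J) t x"
    using pairing_scale(2)[of "I \<times> J" t "-1" x] by simp
  moreover have "norm1 (I \<times> J) (\<lambda>p. - x p) = norm1 (I \<times> J) x" by (simp add: norm1_def)
  ultimately have "r * norm1 (I \<times> J) x \<le> - pairing (I \<times> J) t x"
    using bound[OF x(2)] by simp
  then have "r * norm1 (I \<times> J) x \<le> 0"
    using bound[OF x(1)] by linarith
  then have "norm1 (I \<times> J) x = 0"
    using t(2) norm1_nonneg[of "I \<times> J" x] by (simp add: mult_le_0_iff)
  moreover have "x \<in> space (I \<times> J)" using x(1) by (simp add: max_tensor_def)
  ultimately show ?thesis using fin by (simp add: norm1_eq_0_iff)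
qed

lemma proper_cone_between_min_max:
  assumes fin: "finite I" "finite J" and G: "proper_cone I G" and H: "proper_cone J H"
    and P: "closed P" "wedge P" "min_tensor G H \<subseteq> P" "P \<subseteq> max_tensor I J G H"
  shows "proper_cone (I \<times> J) P"
proof -
  obtain t r where t: "t \<in> min_tensor G H" "r > 0" "cube (I \<times> J) t r \<subseteq> min_tensor G H"
    using min_tensor_interior[OF fin G H] .
  show ?thesis
  proof (rule proper_coneI_cube[OF _ P(1,2) _ _ t(2)])
    show "P \<subseteq> space (I \<times> J)" using P(4) by (auto simp: max_tensor_def)
    show "t \<in> P" "cube (I \<times> J) t r \<subseteq> P" using t(1,3) P(3) by auto
    fix x assume "x \<in> P" "(\<lambda>i. - x i) \<in> P"
    then show "x = (\<lambda>i. 0)" using max_tensor_sharp[OF fin G H] P(4) by blast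
  qed
qed

section \<open>Admissible families of cones\<close>

text \<open>A family of cones T(G, H), one for each pair of proper cones G \<subseteq> R^n, H \<subseteq> R^m, is encoded
  by its graph, so that Zorn's lemma for set inclusion applies to families.\<close>

type_synonym cone_family =
  "(nat \<times> nat \<times> (nat \<Rightarrow> real) set \<times> (nat \<Rightarrow> real) set \<times> (nat \<times> nat \<Rightarrow> real)) set"

definition fibre :: "cone_family \<Rightarrow> nat \<Rightarrow> nat \<Rightarrow> (nat \<Rightarrow> real) set \<Rightarrow> (nat \<Rightarrow> real) set
                      \<Rightarrow> (nat \<times> nat \<Rightarrow> real) set" where
  "fibre T n m G H = {z. (n, m, G, H, z) \<in> T}"

definition admissible :: "cone_family \<Rightarrow> bool" where
  "admissible T \<longleftrightarrow>
    (\<forall>n m G H. proper_cone {..<n} G \<and> proper_cone {..<m} H \<longrightarrow>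
       fibre T n m G H \<subseteq> space ({..<n} \<times> {..<m}) \<and> wedge (fibre T n m G H) \<and>
       min_tensor G H \<subseteq> fibre T n m G H \<and>
       (\<forall>z\<in>fibre T n m G H. \<forall>w\<in>fibre T n m (dual_cone {..<n} G) (dual_cone {..<m} H).
          0 \<le> pairing ({..<n} \<times> {..<m}) w z)) \<and>
    (\<forall>n1 m1 n2 m2 G1 H1 G2 H2 A B.
       proper_cone {..<n1} G1 \<and> proper_cone {..<m1} H1 \<and>
       proper_cone {..<n2} G2 \<and> proper_cone {..<m2} H2 \<and>
       positive_map {..<n1} {..<n2} A G1 G2 \<and> positive_map {..<m1} {..<m2} B H1 H2 \<longrightarrow>
       positive_map ({..<n1} \<times> {..<m1}) ({..<n2} \<times> {..<m2}) (mat_tensor A B)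
         (fibre T n1 m1 G1 H1) (fibre T n2 m2 G2 H2))"

lemma admissibleI:
  assumes "\<And>n m G H. proper_cone {..<n} G \<Longrightarrow> proper_cone {..<m} H \<Longrightarrow>
      fibre T n m G H \<subseteq> space ({..<n} \<times> {..<m})"
    and "\<And>n m G H. proper_cone {..<n} G \<Longrightarrow> proper_cone {..<m} H \<Longrightarrow> wedge (fibre T n m G H)"
    and "\<And>n m G H. proper_cone {..<n} G \<Longrightarrow> proper_cone {..<m} H \<Longrightarrow>
      min_tensor G H \<subseteq> fibre T n m G H"
    and "\<And>n m G H z w. proper_cone {..<n} G \<Longrightarrow> proper_cone {..<m} H \<Longrightarrow>
      z \<in> fibre T n m G H \<Longrightarrow> w \<in> fibre T n m (dual_cone {..<n} G) (dual_cone {..<m} H) \<Longrightarrow>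
      0 \<le> pairing ({..<n} \<times> {..<m}) w z"
    and "\<And>n1 m1 n2 m2 G1 H1 G2 H2 A B.
      proper_cone {..<n1} G1 \<Longrightarrow> proper_cone {..<m1} H1 \<Longrightarrow>
      proper_cone {..<n2} G2 \<Longrightarrow> proper_cone {..<m2} H2 \<Longrightarrow>
      positive_map {..<n1} {..<n2} A G1 G2 \<Longrightarrow> positive_map {..<m1} {..<m2} B H1 H2 \<Longrightarrow>
      positive_map ({..<n1} \<times> {..<m1}) ({..<n2} \<times> {..<m2}) (mat_tensor A B)
        (fibre T n1 m1 G1 H1) (fibre T n2 m2 G2 H2)"
  shows "admissible T"
  unfolding admissible_def
  by (intro conjI allI impI ballI) (simp_all add: assms(1-3,5), blast intro: assms(4))

context
  fixes T :: cone_family and n m :: nat and G H :: "(nat \<Rightarrow> real) set"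
  assumes T: "admissible T" and G: "proper_cone {..<n} G" and H: "proper_cone {..<m} H"
begin

lemma admissible_subset_space: "fibre T n m G H \<subseteq> space ({..<n} \<times> {..<m})"
  and admissible_wedge: "wedge (fibre T n m G H)"
  and admissible_min_tensor: "min_tensor G H \<subseteq> fibre T n m G H"
  using T G H unfolding admissible_def by blast+

lemma admissible_pairing_nonneg:
  "z \<in> fibre T n m G H \<Longrightarrow> w \<in> fibre T n m (dual_cone {..<n} G) (dual_cone {..<m} H) \<Longrightarrow>
    0 \<le> pairing ({..<n} \<times> {..<m}) w z"
  using T G H unfolding admissible_def by blast

end

lemma admissible_positive_map:
  assumes "admissible T"
    and "proper_cone {..<n1} G1" "proper_cone {..<m1} H1"
    and "proper_cone {..<n2} G2" "proper_cone {..<m2} H2"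
    and "positive_map {..<n1} {..<n2} A G1 G2" "positive_map {..<m1} {..<m2} B H1 H2"
  shows "positive_map ({..<n1} \<times> {..<m1}) ({..<n2} \<times> {..<m2}) (mat_tensor A B)
    (fibre T n1 m1 G1 H1) (fibre T n2 m2 G2 H2)"
  using assms unfolding admissible_def by blast

lemma admissible_subset_max_tensor:
  assumes T: "admissible T" and G: "proper_cone {..<n} G" and H: "proper_cone {..<m} H"
  shows "fibre T n m G H \<subseteq> max_tensor {..<n} {..<m} G H"
proof
  fix z assume z: "z \<in> fibre T n m G H"
  have "tensor l l' \<in> fibre T n m (dual_cone {..<n} G) (dual_cone {..<m} H)"
    if "l \<in> dual_cone {..<n} G" "l' \<in> dual_cone {..<m} H" for l l'
    using admissible_min_tensor[OF T dual_cone_proper[OF _ G] dual_cone_proper[OF _ H]]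
      tensor_in_min_tensor[OF that] by auto
  then show "z \<in> max_tensor {..<n} {..<m} G H"
    using admissible_subset_space[OF T G H] admissible_pairing_nonneg[OF T G H z]
    by (auto simp: max_tensor_def z)
qed

lemma fibre_min_family: "fibre {(n, m, G, H, z). z \<in> min_tensor G H} n m G H = min_tensor G H"
  by (simp add: fibre_def)

lemma admissible_min_family: "admissible {(n, m, G, H, z). z \<in> min_tensor G H}"
proof (rule admissibleI; unfold fibre_min_family)
  fix n m :: nat and G H :: "(nat \<Rightarrow> real) set"
  assume G: "proper_cone {..<n} G" and H: "proper_cone {..<m} H"
  show "min_tensor G H \<subseteq> space ({..<n} \<times> {..<m})"
    using min_tensor_subset_space[OF proper_coneD(1)[OF G] proper_coneD(1)[OF H]] .
  show "wedge (min_tensor G H)" by (rule wedge_min_tensor[OF proper_coneD(3)[OF G]])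
  show "min_tensor G H \<subseteq> min_tensor G H" by (rule order_refl)
next
  fix n m :: nat and G H :: "(nat \<Rightarrow> real) set" and z w
  assume "z \<in> min_tensor G H" "w \<in> min_tensor (dual_cone {..<n} G) (dual_cone {..<m} H)"
  then show "0 \<le> pairing ({..<n} \<times> {..<m}) w z" by (rule pairing_min_tensor_dual_nonneg)
next
  fix n1 m1 n2 m2 :: nat and G1 H1 G2 H2 :: "(nat \<Rightarrow> real) set" and A B :: "nat \<Rightarrow> nat \<Rightarrow> real"
  assume "positive_map {..<n1} {..<n2} A G1 G2" "positive_map {..<m1} {..<m2} B H1 H2"
  then show "positive_map ({..<n1} \<times> {..<m1}) ({..<n2} \<times> {..<m2}) (mat_tensor A B)
      (min_tensor G1 H1) (min_tensor G2 H2)"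
    by (rule positive_map_min_tensor)
qed

lemma fibre_Union: "fibre (\<Union>C) n m G H = (\<Union>T\<in>C. fibre T n m G H)"
  by (auto simp: fibre_def)

lemma fibre_mono: "T \<subseteq> T' \<Longrightarrow> fibre T n m G H \<subseteq> fibre T' n m G H"
  by (auto simp: fibre_def)

lemma chain_fibres_common:
  assumes C: "subset.chain A C"
    and x: "x \<in> (\<Union>T\<in>C. fibre T n m G H)" and y: "y \<in> (\<Union>T\<in>C. fibre T n' m' G' H')"
  shows "\<exists>T\<in>C. x \<in> fibre T n m G H \<and> y \<in> fibre T n' m' G' H'"
proof -
  obtain T1 T2 where T12: "T1 \<in> C" "x \<in> fibre T1 n m G H" "T2 \<in> C" "y \<in> fibre T2 n' m' G' H'"
    using x y by blast
  then have "T1 \<subseteq> T2 \<or> T2 \<subseteq> T1" using C by (simp add: subset_chain_def)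
  then show ?thesis
  proof
    assume "T1 \<subseteq> T2"
    then show ?thesis using T12 fibre_mono[of T1 T2] by blast
  next
    assume "T2 \<subseteq> T1"
    then show ?thesis using T12 fibre_mono[of T2 T1] by blast
  qed
qed

lemma admissible_Union_chain:
  assumes C: "subset.chain {T. admissible T} C" "C \<noteq> {}"
  shows "admissible (\<Union>C)"
proof -
  have adm: "admissible T" if "T \<in> C" for T using C(1) that by (auto simp: subset_chain_def)
  note common = chain_fibres_common[OF C(1)]
  show ?thesis
  proof (rule admissibleI; unfold fibre_Union)
    fix n m :: nat and G H :: "(nat \<Rightarrow> real) set"
    assume G: "proper_cone {..<n} G" and H: "proper_cone {..<m} H"
    show "(\<Union>T\<in>C. fibre T n m G H) \<subseteq> space ({..<n} \<times> {..<m})"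
      using admissible_subset_space[OF adm G H] by blast
    show "min_tensor G H \<subseteq> (\<Union>T\<in>C. fibre T n m G H)"
      using admissible_min_tensor[OF adm G H] C(2) by blast
    show "wedge (\<Union>T\<in>C. fibre T n m G H)"
      unfolding wedge_def
    proof (intro conjI ballI allI impI)
      fix x and c :: real assume "x \<in> (\<Union>T\<in>C. fibre T n m G H)" "0 \<le> c"
      then show "(\<lambda>i. c * x i) \<in> (\<Union>T\<in>C. fibre T n m G H)"
        using wedge_scale[OF admissible_wedge[OF adm G H]] by blast
    next
      fix x y assume "x \<in> (\<Union>T\<in>C. fibre T n m G H)" "y \<in> (\<Union>T\<in>C. fibre T n m G H)"
      then obtain T where "T \<in> C" "x \<in> fibre T n m G H" "y \<in> fibre T n m G H"
        using common by blast
      then show "(\<lambda>i. x i + y i) \<in> (\<Union>T\<in>C. fibre T n m G H)"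
        using wedge_add[OF admissible_wedge[OF adm G H]] by blast
    qed
  next
    fix n m :: nat and G H :: "(nat \<Rightarrow> real) set" and z w
    assume G: "proper_cone {..<n} G" and H: "proper_cone {..<m} H"
      and "z \<in> (\<Union>T\<in>C. fibre T n m G H)"
      and "w \<in> (\<Union>T\<in>C. fibre T n m (dual_cone {..<n} G) (dual_cone {..<m} H))"
    then obtain T where "T \<in> C" "z \<in> fibre T n m G H"
        "w \<in> fibre T n m (dual_cone {..<n} G) (dual_cone {..<m} H)"
      using common by blast
    then show "0 \<le> pairing ({..<n} \<times> {..<m}) w z"
      using admissible_pairing_nonneg[OF adm G H] by blast
  next
    fix n1 m1 n2 m2 :: nat and G1 H1 G2 H2 :: "(nat \<Rightarrow> real) set" and A B :: "nat \<Rightarrow> nat \<Rightarrow> real"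
    assume "proper_cone {..<n1} G1" "proper_cone {..<m1} H1"
      "proper_cone {..<n2} G2" "proper_cone {..<m2} H2"
      "positive_map {..<n1} {..<n2} A G1 G2" "positive_map {..<m1} {..<m2} B H1 H2"
    from admissible_positive_map[OF adm this]
    show "positive_map ({..<n1} \<times> {..<m1}) ({..<n2} \<times> {..<m2}) (mat_tensor A B)
        (\<Union>T\<in>C. fibre T n1 m1 G1 H1) (\<Union>T\<in>C. fibre T n2 m2 G2 H2)"
      unfolding positive_map_def by blast
  qed
qed

lemma exists_maximal_admissible: "\<exists>T. admissible T \<and> (\<forall>T'. admissible T' \<and> T \<subseteq> T' \<longrightarrow> T' = T)"
  using subset_Zorn_nonempty[of "{T. admissible T}"] admissible_min_family admissible_Union_chain
  by blast

definition closure_family :: "cone_family \<Rightarrow> cone_family" where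
  "closure_family T = {(n, m, G, H, z). z \<in> closure (fibre T n m G H)}"

lemma fibre_closure_family: "fibre (closure_family T) n m G H = closure (fibre T n m G H)"
  by (simp add: fibre_def closure_family_def)

lemma admissible_closure_family:
  assumes T: "admissible T"
  shows "admissible (closure_family T)"
proof (rule admissibleI; unfold fibre_closure_family)
  fix n m :: nat and G H :: "(nat \<Rightarrow> real) set"
  assume G: "proper_cone {..<n} G" and H: "proper_cone {..<m} H"
  show "closure (fibre T n m G H) \<subseteq> space ({..<n} \<times> {..<m})"
    by (rule closure_minimal[OF admissible_subset_space[OF T G H] closed_space])
  show "wedge (closure (fibre T n m G H))" by (rule wedge_closure[OF admissible_wedge[OF T G H]])
  show "min_tensor G H \<subseteq> closure (fibre T n m G H)"
    using admissible_min_tensor[OF T G H] closure_subset by blast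
next
  fix n m :: nat and G H :: "(nat \<Rightarrow> real) set" and z w
  assume G: "proper_cone {..<n} G" and H: "proper_cone {..<m} H"
    and z: "z \<in> closure (fibre T n m G H)"
    and w: "w \<in> closure (fibre T n m (dual_cone {..<n} G) (dual_cone {..<m} H))"
  have "closure (fibre T n m G H) \<subseteq> {z. 0 \<le> pairing ({..<n} \<times> {..<m}) w' z}"
    if "w' \<in> fibre T n m (dual_cone {..<n} G) (dual_cone {..<m} H)" for w'
    using admissible_pairing_nonneg[OF T G H _ that]
    by (intro closure_minimal closed_Collect_le continuous_intros) auto
  then have "fibre T n m (dual_cone {..<n} G) (dual_cone {..<m} H)
      \<subseteq> {w. 0 \<le> pairing ({..<n} \<times> {..<m}) w z}"
    using z by blast
  then have "closure (fibre T n m (dual_cone {..<n} G) (dual_cone {..<m} H))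
      \<subseteq> {w. 0 \<le> pairing ({..<n} \<times> {..<m}) w z}"
    by (intro closure_minimal closed_Collect_le continuous_intros)
  then show "0 \<le> pairing ({..<n} \<times> {..<m}) w z" using w by blast
next
  fix n1 m1 n2 m2 :: nat and G1 H1 G2 H2 :: "(nat \<Rightarrow> real) set" and A B :: "nat \<Rightarrow> nat \<Rightarrow> real"
  assume "proper_cone {..<n1} G1" "proper_cone {..<m1} H1"
    "proper_cone {..<n2} G2" "proper_cone {..<m2} H2"
    "positive_map {..<n1} {..<n2} A G1 G2" "positive_map {..<m1} {..<m2} B H1 H2"
  from admissible_positive_map[OF T this]
  have "matapp ({..<n1} \<times> {..<m1}) ({..<n2} \<times> {..<m2}) (mat_tensor A B) ` fibre T n1 m1 G1 H1
      \<subseteq> closure (fibre T n2 m2 G2 H2)"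
    using closure_subset unfolding positive_map_def by blast
  then have "matapp ({..<n1} \<times> {..<m1}) ({..<n2} \<times> {..<m2}) (mat_tensor A B) ` closure (fibre T n1 m1 G1 H1)
      \<subseteq> closure (fibre T n2 m2 G2 H2)"
    by (intro image_closure_subset continuous_intros) auto
  then show "positive_map ({..<n1} \<times> {..<m1}) ({..<n2} \<times> {..<m2}) (mat_tensor A B)
      (closure (fibre T n1 m1 G1 H1)) (closure (fibre T n2 m2 G2 H2))"
    unfolding positive_map_def by blast
qed

lemma maximal_admissible_closed:
  assumes T: "admissible T" and max: "\<And>T'. admissible T' \<Longrightarrow> T \<subseteq> T' \<Longrightarrow> T' = T"
  shows "closed (fibre T n m G H)"
proof -
  have "T \<subseteq> closure_family T"
    using closure_subset by (fastforce simp: closure_family_def fibre_def)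
  then have "closure_family T = T" by (rule max[OF admissible_closure_family[OF T]])
  then show ?thesis by (metis closed_closure fibre_closure_family)
qed

section \<open>Enlarging an admissible family by the orbit of a point\<close>

definition minkowski_sum :: "('a \<Rightarrow> real) set \<Rightarrow> ('a \<Rightarrow> real) set \<Rightarrow> ('a \<Rightarrow> real) set" where
  "minkowski_sum P S = {(\<lambda>c. p c + s c) | p s. p \<in> P \<and> s \<in> S}"

lemma minkowski_sumI: "p \<in> P \<Longrightarrow> s \<in> S \<Longrightarrow> (\<lambda>c. p c + s c) \<in> minkowski_sum P S"
  by (auto simp: minkowski_sum_def)

lemma minkowski_sumE:
  assumes "w \<in> minkowski_sum P S"
  obtains p s where "p \<in> P" "s \<in> S" "w = (\<lambda>c. p c + s c)"
  using assms by (auto simp: minkowski_sum_def)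

lemma subset_minkowski_sum: "(\<lambda>c. 0) \<in> S \<Longrightarrow> P \<subseteq> minkowski_sum P S"
  using minkowski_sumI[of _ P "\<lambda>c. 0" S] by auto

lemma minkowski_sum_subset_space:
  "P \<subseteq> space I \<Longrightarrow> S \<subseteq> space I \<Longrightarrow> minkowski_sum P S \<subseteq> space I"
  by (auto simp: minkowski_sum_def space_def subset_iff)

lemma wedge_minkowski_sum:
  assumes P: "wedge P" and S: "wedge S"
  shows "wedge (minkowski_sum P S)"
  unfolding wedge_def
proof (intro conjI ballI allI impI)
  fix w and c :: real assume w: "w \<in> minkowski_sum P S" and "0 \<le> c"
  from w obtain p s where "p \<in> P" "s \<in> S" "w = (\<lambda>c. p c + s c)" by (rule minkowski_sumE)
  then show "(\<lambda>i. c * w i) \<in> minkowski_sum P S"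
    using minkowski_sumI[OF wedge_scale[OF P \<open>p \<in> P\<close> \<open>0 \<le> c\<close>] wedge_scale[OF S \<open>s \<in> S\<close> \<open>0 \<le> c\<close>]]
    by (simp add: distrib_left)
next
  fix w w' assume w: "w \<in> minkowski_sum P S" and w': "w' \<in> minkowski_sum P S"
  from w obtain p s where "p \<in> P" "s \<in> S" "w = (\<lambda>c. p c + s c)" by (rule minkowski_sumE)
  moreover from w' obtain p' s' where "p' \<in> P" "s' \<in> S" "w' = (\<lambda>c. p' c + s' c)"
    by (rule minkowski_sumE)
  ultimately show "(\<lambda>i. w i + w' i) \<in> minkowski_sum P S"
    using minkowski_sumI[OF wedge_add[OF P \<open>p \<in> P\<close> \<open>p' \<in> P\<close>] wedge_add[OF S \<open>s \<in> S\<close> \<open>s' \<in> S\<close>]]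
    by (simp add: ac_simps)
qed

definition positive_images ::
  "nat \<Rightarrow> nat \<Rightarrow> (nat \<Rightarrow> real) set \<Rightarrow> (nat \<Rightarrow> real) set \<Rightarrow> (nat \<times> nat \<Rightarrow> real) \<Rightarrow>
   nat \<Rightarrow> nat \<Rightarrow> (nat \<Rightarrow> real) set \<Rightarrow> (nat \<Rightarrow> real) set \<Rightarrow> (nat \<times> nat \<Rightarrow> real) set" where
  "positive_images n m G H z n' m' G' H' =
     {matapp ({..<n} \<times> {..<m}) ({..<n'} \<times> {..<m'}) (mat_tensor A B) z | A B.
        positive_map {..<n} {..<n'} A G G' \<and> positive_map {..<m} {..<m'} B H H'}"

lemma positive_imagesI:
  "positive_map {..<n} {..<n'} A G G' \<Longrightarrow> positive_map {..<m} {..<m'} B H H' \<Longrightarrow>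
    matapp ({..<n} \<times> {..<m}) ({..<n'} \<times> {..<m'}) (mat_tensor A B) z \<in> positive_images n m G H z n' m' G' H'"
  by (auto simp: positive_images_def)

lemma positive_imagesE:
  assumes "x \<in> positive_images n m G H z n' m' G' H'"
  obtains A B where "positive_map {..<n} {..<n'} A G G'" "positive_map {..<m} {..<m'} B H H'"
    "x = matapp ({..<n} \<times> {..<m}) ({..<n'} \<times> {..<m'}) (mat_tensor A B) z"
  using assms by (auto simp: positive_images_def)

lemma positive_images_scale:
  assumes "wedge G'" "x \<in> positive_images n m G H z n' m' G' H'" "c \<ge> 0"
  shows "(\<lambda>i. c * x i) \<in> positive_images n m G H z n' m' G' H'"
  using assms(2)
proof (rule positive_imagesE)
  fix A B assume "positive_map {..<n} {..<n'} A G G'" "positive_map {..<m} {..<m'} B H H'"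
    and x: "x = matapp ({..<n} \<times> {..<m}) ({..<n'} \<times> {..<m'}) (mat_tensor A B) z"
  then have "matapp ({..<n} \<times> {..<m}) ({..<n'} \<times> {..<m'}) (mat_tensor (\<lambda>k i. c * A k i) B) z
      \<in> positive_images n m G H z n' m' G' H'"
    using assms(1,3) by (intro positive_imagesI positive_map_scale)
  then show ?thesis by (simp add: x mat_tensor_scale matapp_scale_mat)
qed

lemma matapp_positive_images:
  assumes "positive_map {..<n1} {..<n2} C G1 G2" "positive_map {..<m1} {..<m2} D H1 H2"
    and "x \<in> positive_images n m G H z n1 m1 G1 H1"
  shows "matapp ({..<n1} \<times> {..<m1}) ({..<n2} \<times> {..<m2}) (mat_tensor C D) x
    \<in> positive_images n m G H z n2 m2 G2 H2"
  using assms(3)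
proof (rule positive_imagesE)
  fix A B assume A: "positive_map {..<n} {..<n1} A G G1" and B: "positive_map {..<m} {..<m1} B H H1"
    and x: "x = matapp ({..<n} \<times> {..<m}) ({..<n1} \<times> {..<m1}) (mat_tensor A B) z"
  have "matapp ({..<n} \<times> {..<m}) ({..<n2} \<times> {..<m2})
      (mat_tensor (mat_mult {..<n1} C A) (mat_mult {..<m1} D B)) z \<in> positive_images n m G H z n2 m2 G2 H2"
    using positive_map_mat_mult[OF _ _ A assms(1)] positive_map_mat_mult[OF _ _ B assms(2)]
    by (intro positive_imagesI) auto
  then show ?thesis by (simp add: x matapp_mat_mult mat_mult_mat_tensor)
qed

definition extend_family ::
  "cone_family \<Rightarrow> nat \<Rightarrow> nat \<Rightarrow> (nat \<Rightarrow> real) set \<Rightarrow> (nat \<Rightarrow> real) set \<Rightarrow> (nat \<times> nat \<Rightarrow> real)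
   \<Rightarrow> cone_family" where
  "extend_family T n m G H z = T \<union>
     {(n', m', G', H', w) | n' m' G' H' w. proper_cone {..<n'} G' \<and> proper_cone {..<m'} H' \<and>
        w \<in> minkowski_sum (fibre T n' m' G' H') (finite_sums (positive_images n m G H z n' m' G' H'))}"

lemma subset_extend_family: "T \<subseteq> extend_family T n m G H z"
  by (simp add: extend_family_def)

lemma fibre_extend_family:
  assumes "proper_cone {..<n'} G'" "proper_cone {..<m'} H'"
  shows "fibre (extend_family T n m G H z) n' m' G' H'
    = minkowski_sum (fibre T n' m' G' H') (finite_sums (positive_images n m G H z n' m' G' H'))"
proof -
  have "fibre (extend_family T n m G H z) n' m' G' H' = fibre T n' m' G' H' \<union>
      minkowski_sum (fibre T n' m' G' H') (finite_sums (positive_images n m G H z n' m' G' H'))"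
    using assms by (auto simp: fibre_def extend_family_def)
  then show ?thesis using subset_minkowski_sum[OF zero_in_finite_sums] by blast
qed

lemma positive_map_extension:
  assumes T: "admissible T"
    and G1: "proper_cone {..<n1} G1" and H1: "proper_cone {..<m1} H1"
    and G2: "proper_cone {..<n2} G2" and H2: "proper_cone {..<m2} H2"
    and C: "positive_map {..<n1} {..<n2} C G1 G2" and D: "positive_map {..<m1} {..<m2} D H1 H2"
  shows "positive_map ({..<n1} \<times> {..<m1}) ({..<n2} \<times> {..<m2}) (mat_tensor C D)
    (minkowski_sum (fibre T n1 m1 G1 H1) (finite_sums (positive_images n m G H z n1 m1 G1 H1)))
    (minkowski_sum (fibre T n2 m2 G2 H2) (finite_sums (positive_images n m G H z n2 m2 G2 H2)))"
  unfolding positive_map_def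
proof
  let ?L = "matapp ({..<n1} \<times> {..<m1}) ({..<n2} \<times> {..<m2}) (mat_tensor C D)"
  fix w
  assume "w \<in> minkowski_sum (fibre T n1 m1 G1 H1) (finite_sums (positive_images n m G H z n1 m1 G1 H1))"
  then obtain p s where p: "p \<in> fibre T n1 m1 G1 H1"
    and s: "s \<in> finite_sums (positive_images n m G H z n1 m1 G1 H1)" and w: "w = (\<lambda>c. p c + s c)"
    by (rule minkowski_sumE)
  have "?L p \<in> fibre T n2 m2 G2 H2"
    using admissible_positive_map[OF T G1 H1 G2 H2 C D] p by (auto simp: positive_map_def)
  moreover have "?L ` positive_images n m G H z n1 m1 G1 H1 \<subseteq> positive_images n m G H z n2 m2 G2 H2"
    using matapp_positive_images[OF C D] by blast
  then have "?L s \<in> finite_sums (positive_images n m G H z n2 m2 G2 H2)"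
    using matapp_finite_sums[OF s] finite_sums_mono by blast
  ultimately show
    "?L w \<in> minkowski_sum (fibre T n2 m2 G2 H2) (finite_sums (positive_images n m G H z n2 m2 G2 H2))"
    unfolding w matapp_add by (rule minkowski_sumI)
qed

context
  fixes T :: cone_family and n m :: nat and G H :: "(nat \<Rightarrow> real) set" and z :: "nat \<times> nat \<Rightarrow> real"
  assumes T: "admissible T" and G: "proper_cone {..<n} G" and H: "proper_cone {..<m} H"
    and z_dual: "z \<in> dual_cone ({..<n} \<times> {..<m}) (fibre T n m (dual_cone {..<n} G) (dual_cone {..<m} H))"
    and z_self: "\<And>A B. positive_map {..<n} {..<n} A G (dual_cone {..<n} G) \<Longrightarrow>
      positive_map {..<m} {..<m} B H (dual_cone {..<m} H) \<Longrightarrow>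
      0 \<le> pairing ({..<n} \<times> {..<m}) z (matapp ({..<n} \<times> {..<m}) ({..<n} \<times> {..<m}) (mat_tensor A B) z)"
begin

lemma pairing_fibre_positive_image:
  assumes G': "proper_cone {..<n'} G'" and H': "proper_cone {..<m'} H'"
    and p: "p \<in> fibre T n' m' (dual_cone {..<n'} G') (dual_cone {..<m'} H')"
    and x: "x \<in> positive_images n m G H z n' m' G' H'"
  shows "0 \<le> pairing ({..<n'} \<times> {..<m'}) p x"
  using x
proof (rule positive_imagesE)
  fix A B assume A: "positive_map {..<n} {..<n'} A G G'" and B: "positive_map {..<m} {..<m'} B H H'"
    and x: "x = matapp ({..<n} \<times> {..<m}) ({..<n'} \<times> {..<m'}) (mat_tensor A B) z"
  have "matapp ({..<n'} \<times> {..<m'}) ({..<n} \<times> {..<m}) (mat_tensor (mat_transpose A) (mat_transpose B)) p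
      \<in> fibre T n m (dual_cone {..<n} G) (dual_cone {..<m} H)"
    using admissible_positive_map[OF T dual_cone_proper[OF _ G'] dual_cone_proper[OF _ H']
        dual_cone_proper[OF _ G] dual_cone_proper[OF _ H] positive_map_transpose[OF A]
        positive_map_transpose[OF B]] p
    by (auto simp: positive_map_def)
  then have "0 \<le> pairing ({..<n} \<times> {..<m}) z
      (matapp ({..<n'} \<times> {..<m'}) ({..<n} \<times> {..<m}) (mat_tensor (mat_transpose A) (mat_transpose B)) p)"
    using z_dual by (auto simp: dual_cone_def)
  also have "\<dots> = pairing ({..<n'} \<times> {..<m'}) p x"
    unfolding x pairing_matapp[of "{..<n'} \<times> {..<m'}" p] mat_transpose_mat_tensor by (rule pairing_commute)
  finally show ?thesis .
qed

lemma pairing_positive_images: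
  assumes G': "proper_cone {..<n'} G'" and H': "proper_cone {..<m'} H'"
    and x: "x \<in> positive_images n m G H z n' m' G' H'"
    and y: "y \<in> positive_images n m G H z n' m' (dual_cone {..<n'} G') (dual_cone {..<m'} H')"
  shows "0 \<le> pairing ({..<n'} \<times> {..<m'}) y x"
proof -
  obtain A B where A: "positive_map {..<n} {..<n'} A G G'" and B: "positive_map {..<m} {..<m'} B H H'"
    and x: "x = matapp ({..<n} \<times> {..<m}) ({..<n'} \<times> {..<m'}) (mat_tensor A B) z"
    using x by (rule positive_imagesE)
  obtain A' B' where A': "positive_map {..<n} {..<n'} A' G (dual_cone {..<n'} G')"
    and B': "positive_map {..<m} {..<m'} B' H (dual_cone {..<m'} H')"
    and y: "y = matapp ({..<n} \<times> {..<m}) ({..<n'} \<times> {..<m'}) (mat_tensor A' B') z"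
    using y by (rule positive_imagesE)
  have AA: "positive_map {..<n} {..<n} (mat_mult {..<n'} (mat_transpose A) A') G (dual_cone {..<n} G)"
    by (rule positive_map_mat_mult[OF _ _ A' positive_map_transpose[OF A]]) auto
  have BB: "positive_map {..<m} {..<m} (mat_mult {..<m'} (mat_transpose B) B') H (dual_cone {..<m} H)"
    by (rule positive_map_mat_mult[OF _ _ B' positive_map_transpose[OF B]]) auto
  have "pairing ({..<n'} \<times> {..<m'}) y x = pairing ({..<n} \<times> {..<m})
      (matapp ({..<n'} \<times> {..<m'}) ({..<n} \<times> {..<m}) (mat_tensor (mat_transpose A) (mat_transpose B)) y) z"
    unfolding x pairing_matapp[of "{..<n'} \<times> {..<m'}" y] mat_transpose_mat_tensor ..
  also have "\<dots> = pairing ({..<n} \<times> {..<m}) (matapp ({..<n} \<times> {..<m}) ({..<n} \<times> {..<m})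
      (mat_tensor (mat_mult {..<n'} (mat_transpose A) A') (mat_mult {..<m'} (mat_transpose B) B')) z) z"
    unfolding y by (simp add: matapp_mat_mult mat_mult_mat_tensor)
  also have "\<dots> = pairing ({..<n} \<times> {..<m}) z (matapp ({..<n} \<times> {..<m}) ({..<n} \<times> {..<m})
      (mat_tensor (mat_mult {..<n'} (mat_transpose A) A') (mat_mult {..<m'} (mat_transpose B) B')) z)"
    by (rule pairing_commute)
  finally show ?thesis using z_self[OF AA BB] by simp
qed

lemma pairing_extension_nonneg:
  assumes G': "proper_cone {..<n'} G'" and H': "proper_cone {..<m'} H'"
    and w1: "w1 \<in> minkowski_sum (fibre T n' m' G' H') (finite_sums (positive_images n m G H z n' m' G' H'))"
    and w2: "w2 \<in> minkowski_sum (fibre T n' m' (dual_cone {..<n'} G') (dual_cone {..<m'} H'))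
      (finite_sums (positive_images n m G H z n' m' (dual_cone {..<n'} G') (dual_cone {..<m'} H')))"
  shows "0 \<le> pairing ({..<n'} \<times> {..<m'}) w2 w1"
proof -
  let ?IJ = "{..<n'} \<times> {..<m'}"
  note dG' = dual_cone_proper[OF finite_lessThan G'] and dH' = dual_cone_proper[OF finite_lessThan H']
  obtain p1 s1 where p1: "p1 \<in> fibre T n' m' G' H'"
    and s1: "s1 \<in> finite_sums (positive_images n m G H z n' m' G' H')" and w1: "w1 = (\<lambda>c. p1 c + s1 c)"
    using w1 by (rule minkowski_sumE)
  obtain p2 s2 where p2: "p2 \<in> fibre T n' m' (dual_cone {..<n'} G') (dual_cone {..<m'} H')"
    and s2: "s2 \<in> finite_sums (positive_images n m G H z n' m' (dual_cone {..<n'} G') (dual_cone {..<m'} H'))"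
    and w2: "w2 = (\<lambda>c. p2 c + s2 c)"
    using w2 by (rule minkowski_sumE)
  have p1': "p1 \<in> fibre T n' m' (dual_cone {..<n'} (dual_cone {..<n'} G'))
      (dual_cone {..<m'} (dual_cone {..<m'} H'))"
    using p1 by (simp add: dual_dual_cone_proper[OF _ G'] dual_dual_cone_proper[OF _ H'])
  have "0 \<le> pairing ?IJ p2 p1" by (rule admissible_pairing_nonneg[OF T G' H' p1 p2])
  moreover have "0 \<le> pairing ?IJ p2 s1"
    by (rule pairing_finite_sums_nonneg[OF _ subset_finite_sums[THEN subsetD, OF singletonI] s1])
      (use pairing_fibre_positive_image[OF G' H' p2] in auto)
  moreover have "0 \<le> pairing ?IJ p1 s2"
    by (rule pairing_finite_sums_nonneg[OF _ subset_finite_sums[THEN subsetD, OF singletonI] s2])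
      (use pairing_fibre_positive_image[OF dG' dH' p1'] in auto)
  moreover have "0 \<le> pairing ?IJ s2 s1"
    using pairing_finite_sums_nonneg[OF pairing_positive_images[OF G' H'] s2 s1] .
  ultimately show ?thesis
    by (simp add: w1 w2 pairing_add pairing_commute[of _ s2 p1])
qed


lemma admissible_extend_family: "admissible (extend_family T n m G H z)"
proof (rule admissibleI)
  fix n' m' :: nat and G' H' :: "(nat \<Rightarrow> real) set"
  assume G': "proper_cone {..<n'} G'" and H': "proper_cone {..<m'} H'"
  note fibre_extend = fibre_extend_family[OF G' H']
  have "positive_images n m G H z n' m' G' H' \<subseteq> space ({..<n'} \<times> {..<m'})"
    by (auto elim!: positive_imagesE simp: matapp_in_space)
  then show "fibre (extend_family T n m G H z) n' m' G' H' \<subseteq> space ({..<n'} \<times> {..<m'})"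
    unfolding fibre_extend
    by (intro minkowski_sum_subset_space admissible_subset_space[OF T G' H'] finite_sums_subset_space)
  show "wedge (fibre (extend_family T n m G H z) n' m' G' H')"
    unfolding fibre_extend
    by (intro wedge_minkowski_sum admissible_wedge[OF T G' H'] wedge_finite_sums
        positive_images_scale[OF proper_coneD(3)[OF G']])
  show "min_tensor G' H' \<subseteq> fibre (extend_family T n m G H z) n' m' G' H'"
    unfolding fibre_extend using admissible_min_tensor[OF T G' H'] subset_minkowski_sum[OF zero_in_finite_sums]
    by blast
next
  fix n' m' :: nat and G' H' :: "(nat \<Rightarrow> real) set" and w1 w2
  assume G': "proper_cone {..<n'} G'" and H': "proper_cone {..<m'} H'"
    and w1: "w1 \<in> fibre (extend_family T n m G H z) n' m' G' H'"
    and w2: "w2 \<in> fibre (extend_family T n m G H z) n' m' (dual_cone {..<n'} G') (dual_cone {..<m'} H')"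
  show "0 \<le> pairing ({..<n'} \<times> {..<m'}) w2 w1"
    using w1 w2 unfolding fibre_extend_family[OF G' H']
      fibre_extend_family[OF dual_cone_proper[OF finite_lessThan G'] dual_cone_proper[OF finite_lessThan H']]
    by (rule pairing_extension_nonneg[OF G' H'])
next
  fix n1 m1 n2 m2 :: nat and G1 H1 G2 H2 :: "(nat \<Rightarrow> real) set" and C D :: "nat \<Rightarrow> nat \<Rightarrow> real"
  assume "proper_cone {..<n1} G1" "proper_cone {..<m1} H1" "proper_cone {..<n2} G2" "proper_cone {..<m2} H2"
    and "positive_map {..<n1} {..<n2} C G1 G2" "positive_map {..<m1} {..<m2} D H1 H2"
  then show "positive_map ({..<n1} \<times> {..<m1}) ({..<n2} \<times> {..<m2}) (mat_tensor C D)
      (fibre (extend_family T n m G H z) n1 m1 G1 H1) (fibre (extend_family T n m G H z) n2 m2 G2 H2)"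
    by (simp add: fibre_extend_family positive_map_extension[OF T])
qed

lemma in_fibre_extend_family: "z \<in> fibre (extend_family T n m G H z) n m G H"
proof -
  have "G \<noteq> {}" "H \<noteq> {}" using proper_coneD(4) G H by auto
  then have "min_tensor G H \<noteq> {}" using tensor_in_min_tensor by blast
  then have "(\<lambda>c. 0) \<in> fibre T n m G H"
    using admissible_min_tensor[OF T G H] by (intro wedge_zero admissible_wedge[OF T G H]) auto
  moreover have "z \<in> finite_sums (positive_images n m G H z n m G H)"
  proof (rule subset_finite_sums[THEN subsetD])
    have "z \<in> space ({..<n} \<times> {..<m})" using z_dual by (auto simp: dual_cone_def)
    then have "z = matapp ({..<n} \<times> {..<m}) ({..<n} \<times> {..<m}) (mat_tensor id_mat id_mat) z"
      by (simp add: mat_tensor_id_mat matapp_id_mat)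
    moreover have "matapp ({..<n} \<times> {..<m}) ({..<n} \<times> {..<m}) (mat_tensor id_mat id_mat) z
        \<in> positive_images n m G H z n m G H"
      using proper_coneD(1)[OF G] proper_coneD(1)[OF H]
      by (intro positive_imagesI positive_map_id_mat) auto
    ultimately show "z \<in> positive_images n m G H z n m G H" by simp
  qed
  ultimately show ?thesis
    unfolding fibre_extend_family[OF G H] using minkowski_sumI by fastforce
qed

end

section \<open>A point just beyond the boundary\<close>

lemma last_point_on_segment:
  fixes x y :: "'a \<Rightarrow> real"
  assumes P: "closed P" and x: "x \<in> P" and y: "y \<notin> P"
  obtains t0 where "0 \<le> t0" "t0 < 1" "(\<lambda>c. (1 - t0) * x c + t0 * y c) \<in> P"
    "\<And>t. t0 < t \<Longrightarrow> t \<le> 1 \<Longrightarrow> (\<lambda>c. (1 - t) * x c + t * y c) \<notin> P"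
proof -
  define seg where "seg t = (\<lambda>c. (1 - t) * x c + t * y c)" for t :: real
  define S where "S = {0..1} \<inter> seg -` P"
  have "closed S" unfolding S_def seg_def
    by (intro continuous_closed_preimage continuous_on_coordinatewise_then_product continuous_intros P)
  moreover have "0 \<in> S" using x by (simp add: S_def seg_def)
  moreover have bdd: "bdd_above S" by (auto simp: S_def bdd_above_def)
  ultimately have "Sup S \<in> S" using closed_contains_Sup by blast
  then have t0: "0 \<le> Sup S" "Sup S \<le> 1" "seg (Sup S) \<in> P" by (auto simp: S_def)
  moreover have "Sup S \<noteq> 1" using t0(3) y by (auto simp: seg_def)
  moreover have "seg t \<notin> P" if "Sup S < t" "t \<le> 1" for t
    using cSup_upper[OF _ bdd, of t] that t0 by (auto simp: S_def)
  ultimately show thesis using that[of "Sup S"] by (simp add: seg_def)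
qed

lemma cube_segment_subset_wedge:
  assumes D: "wedge D" and x: "x \<in> space I" "cube I x r \<subseteq> D" "r \<ge> 0" and y: "y \<in> space I" "y \<in> D"
    and t: "0 \<le> t" "t \<le> t1" "t1 < 1"
  shows "cube I (\<lambda>c. (1 - t) * x c + t * y c) ((1 - t1) * r) \<subseteq> D"
proof
  fix w assume w: "w \<in> cube I (\<lambda>c. (1 - t) * x c + t * y c) ((1 - t1) * r)"
  define s where "s = 1 - t"
  have s: "s > 0" "1 - t1 \<le> s" using t by (auto simp: s_def)
  define u where "u c = (w c - ((1 - t) * x c + t * y c)) / s" for c
  have "(\<lambda>c. x c + u c) \<in> cube I x r"
  proof (rule cube_memI)
    show "(\<lambda>c. x c + u c) \<in> space I" using x(1) y(1) w by (auto simp: u_def space_def cube_def)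
    fix c assume "c \<in> I"
    then have "\<bar>u c\<bar> \<le> (1 - t1) * r / s" using w s by (auto simp: u_def cube_def abs_divide divide_right_mono)
    also have "\<dots> \<le> r" using s x(3) by (simp add: divide_le_eq mult.commute mult_left_mono)
    finally show "\<bar>x c + u c - x c\<bar> \<le> r" by simp
  qed
  then have "(\<lambda>c. x c + u c) \<in> D" using x(2) by blast
  from wedge_add[OF D wedge_scale[OF D this] wedge_scale[OF D y(2)]]
  have "(\<lambda>c. s * (x c + u c) + t * y c) \<in> D" using s t by simp
  moreover have "(\<lambda>c. s * (x c + u c) + t * y c) = w"
    using s by (auto simp: fun_eq_iff u_def s_def field_simps)
  ultimately show "w \<in> D" by simp
qed

lemma abs_convex_combination_le:
  fixes a b t :: real
  assumes "0 \<le> t" "t \<le> 1"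
  shows "\<bar>(1 - t) * a + t * b\<bar> \<le> \<bar>a\<bar> + \<bar>b\<bar>"
proof -
  have "\<bar>(1 - t) * a + t * b\<bar> \<le> (1 - t) * \<bar>a\<bar> + t * \<bar>b\<bar>"
    using assms by (metis abs_mult abs_of_nonneg abs_triangle_ineq diff_ge_0_iff_ge)
  also have "\<dots> \<le> \<bar>a\<bar> + \<bar>b\<bar>"
    using assms by (intro add_mono mult_left_le_one_le) auto
  finally show ?thesis .
qed

lemma exists_segment_in_cube:
  assumes fin: "finite I" and x: "x \<in> space I" and v: "v \<in> space I" and \<rho>: "\<rho> > 0"
  obtains c where "c > 0" "\<And>s. \<bar>s\<bar> \<le> c \<Longrightarrow> (\<lambda>i. x i + s * v i) \<in> cube I x \<rho>"
proof
  define c where "c = \<rho> / (1 + norm1 I v)"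
  show "c > 0" using \<rho> norm1_nonneg[of I v] by (simp add: c_def add_pos_nonneg)
  fix s assume s: "\<bar>s\<bar> \<le> c"
  show "(\<lambda>i. x i + s * v i) \<in> cube I x \<rho>"
  proof (rule cube_memI)
    show "(\<lambda>i. x i + s * v i) \<in> space I" using x v by (auto simp: space_def)
    fix i assume "i \<in> I"
    have "\<bar>s\<bar> * \<bar>v i\<bar> \<le> c * (1 + norm1 I v)"
      using s abs_le_norm1[OF fin \<open>i \<in> I\<close>, of v] by (intro mult_mono) auto
    then show "\<bar>x i + s * v i - x i\<bar> \<le> \<rho>" using \<rho> norm1_nonneg[of I v] by (simp add: c_def abs_mult)
  qed
qed

text \<open>z0 is the last point of P on the segment from x to y, and v = y - x.\<close>

lemma boundary_crossing:
  assumes P: "closed P" "P \<subseteq> D" and x: "x \<in> space I" "cube I x r \<subseteq> P" "r > 0"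
    and D: "wedge D" and y: "y \<in> space I" "y \<in> D" "y \<notin> P"
  obtains z0 \<rho> \<delta> v where "z0 \<in> P" "\<rho> > 0" "\<delta> > 0" "v \<in> space I"
    "\<And>e. 0 < e \<Longrightarrow> e \<le> \<delta> \<Longrightarrow> (\<lambda>i. z0 i + e * v i) \<notin> P"
    "\<And>e. 0 \<le> e \<Longrightarrow> e \<le> \<delta> \<Longrightarrow> cube I (\<lambda>i. z0 i + e * v i) \<rho> \<subseteq> D"
    "\<And>e i. 0 \<le> e \<Longrightarrow> e \<le> \<delta> \<Longrightarrow> \<bar>z0 i + e * v i\<bar> \<le> \<bar>x i\<bar> + \<bar>y i\<bar>"
proof -
  have "x \<in> P" using x by (intro subsetD[OF x(2)] cube_memI) auto
  then obtain t0 where t0: "0 \<le> t0" "t0 < 1" "(\<lambda>c. (1 - t0) * x c + t0 * y c) \<in> P"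
    and outside: "\<And>t. t0 < t \<Longrightarrow> t \<le> 1 \<Longrightarrow> (\<lambda>c. (1 - t) * x c + t * y c) \<notin> P"
    using last_point_on_segment[OF P(1) _ y(3)] by blast
  define z0 where "z0 = (\<lambda>c. (1 - t0) * x c + t0 * y c)"
  define v where "v = (\<lambda>c. y c - x c)"
  define t1 where "t1 = (1 + t0) / 2"
  have seg: "z0 i + e * v i = (1 - (t0 + e)) * x i + (t0 + e) * y i" for e i
    by (auto simp: z0_def v_def algebra_simps)
  have "cube I (\<lambda>i. z0 i + e * v i) ((1 - t1) * r) \<subseteq> D" if "0 \<le> e" "e \<le> t1 - t0" for e
    unfolding seg using that t0 x P(2)
    by (intro cube_segment_subset_wedge[OF D x(1) _ _ y(1,2)]) (auto simp: t1_def)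
  moreover have "(\<lambda>i. z0 i + e * v i) \<notin> P" if "0 < e" "e \<le> t1 - t0" for e
    unfolding seg using that t0 by (intro outside) (auto simp: t1_def)
  moreover have "\<bar>z0 i + e * v i\<bar> \<le> \<bar>x i\<bar> + \<bar>y i\<bar>" if "0 \<le> e" "e \<le> t1 - t0" for e i
    unfolding seg using that t0 by (intro abs_convex_combination_le) (auto simp: t1_def)
  moreover have "z0 \<in> P" "(1 - t1) * r > 0" "t1 - t0 > 0" "v \<in> space I"
    using t0 x(1,3) y(1) by (auto simp: z0_def t1_def v_def space_def)
  ultimately show thesis using that[of z0 "(1 - t1) * r" "t1 - t0" v] by blast
qed

lemma norm1_direction_bound:
  assumes x: "x \<in> space I" "cube I x r \<subseteq> S" "r \<ge> 0" and c: "c > 0"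
    and plus: "\<And>s. s \<in> S \<Longrightarrow> 0 \<le> pairing I s (\<lambda>i. k i + c * d i)"
    and minus: "\<And>s. s \<in> S \<Longrightarrow> 0 \<le> pairing I s (\<lambda>i. k i + (- c) * d i)"
  shows "c * r * norm1 I d \<le> pairing I x k"
proof -
  have "2 * c * norm1 I d \<le> norm1 I (\<lambda>i. k i + c * d i) + norm1 I (\<lambda>i. k i + (- c) * d i)"
    unfolding norm1_def sum_distrib_left sum.distrib[symmetric]
  proof (rule sum_mono)
    fix i
    have "2 * c * \<bar>d i\<bar> = \<bar>(k i + c * d i) - (k i + (- c) * d i)\<bar>" using c by (simp add: abs_mult)
    then show "2 * c * \<bar>d i\<bar> \<le> \<bar>k i + c * d i\<bar> + \<bar>k i + (- c) * d i\<bar>"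
      by (metis abs_triangle_ineq4)
  qed
  from mult_left_mono[OF this x(3)]
  have "2 * (c * r * norm1 I d) \<le> r * norm1 I (\<lambda>i. k i + c * d i) + r * norm1 I (\<lambda>i. k i + (- c) * d i)"
    by (simp add: algebra_simps)
  also have "\<dots> \<le> pairing I x (\<lambda>i. k i + c * d i) + pairing I x (\<lambda>i. k i + (- c) * d i)"
    using norm1_le_pairing[OF x(1) x(3) x(2) plus] norm1_le_pairing[OF x(1) x(3) x(2) minus]
    by (rule add_mono)
  also have "\<dots> = 2 * pairing I x k"
    unfolding pairing_add pairing_scale by simp
  finally show ?thesis by simp
qed

lemma self_pairing_nonneg:
  assumes z: "z \<in> space I" "cube I z \<rho> \<subseteq> D" "\<rho> \<ge> 0" "z = (\<lambda>i. z0 i + e * v i)" "e \<ge> 0"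
    and k0: "\<And>s. s \<in> D \<Longrightarrow> 0 \<le> pairing I s (matapp I I M z0)"
    and zb: "\<And>i. i \<in> I \<Longrightarrow> \<bar>z i\<bar> \<le> Zb" "Zb \<ge> 0"
    and dir: "K * norm1 I (matapp I I M v) \<le> W * norm1 I (matapp I I M z0)"
    and small: "e * Zb * W \<le> \<rho> * K" "K > 0"
  shows "0 \<le> pairing I z (matapp I I M z)"
proof -
  define N where "N = norm1 I (matapp I I M z0)"
  define V where "V = norm1 I (matapp I I M v)"
  define b where "b = pairing I z (matapp I I M v)"
  have "K * (e * Zb * V) \<le> e * Zb * (W * N)"
    using mult_left_mono[OF dir, of "e * Zb"] z(5) zb(2) by (simp add: N_def V_def mult_ac)
  also have "\<dots> \<le> K * (\<rho> * N)"
    using mult_right_mono[OF small(1), of N] norm1_nonneg[of I] by (simp add: N_def mult_ac)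
  finally have "e * Zb * V \<le> \<rho> * N" using small(2) by simp
  moreover have "\<rho> * N \<le> pairing I z (matapp I I M z0)"
    unfolding N_def by (rule norm1_le_pairing[OF z(1,3,2) k0])
  moreover have "e * \<bar>b\<bar> \<le> e * (Zb * V)"
    unfolding b_def V_def by (rule mult_left_mono[OF abs_pairing_le[OF zb(1)] z(5)])
  moreover have "- (e * \<bar>b\<bar>) \<le> e * b"
    using z(5) abs_ge_minus_self[of "e * b"] by (simp add: abs_mult)
  moreover have "pairing I z (matapp I I M z) = pairing I z (matapp I I M z0) + e * b"
    unfolding b_def by (subst (2) z(4)) (simp add: matapp_add matapp_scale pairing_add pairing_scale)
  ultimately show ?thesis by (simp add: mult.assoc)
qed

lemma min_tensor_pairing_positive_dual_nonneg:
  assumes A: "positive_map I I A G (dual_cone I G)" and B: "positive_map J J B H (dual_cone J H)"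
    and GH: "G \<subseteq> space I" "H \<subseteq> space J"
    and Q: "min_tensor (dual_cone I G) (dual_cone J H) \<subseteq> Q"
    and p: "p \<in> dual_cone (I \<times> J) Q" and s: "s \<in> min_tensor G H"
  shows "0 \<le> pairing (I \<times> J) s (matapp (I \<times> J) (I \<times> J) (mat_tensor A B) p)"
  using s
proof (rule min_tensor_pairing_nonneg[rotated])
  fix g h assume "g \<in> G" "h \<in> H"
  then have "matapp I I (mat_transpose A) g \<in> dual_cone I G" "matapp J J (mat_transpose B) h \<in> dual_cone J H"
    using positive_map_transpose[OF A] positive_map_transpose[OF B]
      subset_dual_dual_cone[OF GH(1)] subset_dual_dual_cone[OF GH(2)]
    by (auto simp: positive_map_def)
  then have "tensor (matapp I I (mat_transpose A) g) (matapp J J (mat_transpose B) h) \<in> Q"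
    using Q tensor_in_min_tensor by blast
  then have "0 \<le> pairing (I \<times> J) p (tensor (matapp I I (mat_transpose A) g) (matapp J J (mat_transpose B) h))"
    using p by (auto simp: dual_cone_def)
  then show "0 \<le> pairing (I \<times> J) (tensor g h) (matapp (I \<times> J) (I \<times> J) (mat_tensor A B) p)"
    by (simp add: pairing_matapp[of "I \<times> J" "tensor g h"] mat_transpose_mat_tensor matapp_mat_tensor
        pairing_commute[of "I \<times> J" p])
qed

lemma positive_dual_direction_bound:
  assumes fin: "finite I" "finite J"
    and A: "positive_map I I A G (dual_cone I G)" and B: "positive_map J J B H (dual_cone J H)"
    and GH: "G \<subseteq> space I" "H \<subseteq> space J" and Q: "min_tensor (dual_cone I G) (dual_cone J H) \<subseteq> Q"
    and x: "x \<in> space (I \<times> J)" "cube (I \<times> J) x r \<subseteq> min_tensor G H" "r \<ge> 0" and c: "c > 0"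
    and pm: "(\<lambda>i. z0 i + c * v i) \<in> dual_cone (I \<times> J) Q" "(\<lambda>i. z0 i + (- c) * v i) \<in> dual_cone (I \<times> J) Q"
  shows "c * r * norm1 (I \<times> J) (matapp (I \<times> J) (I \<times> J) (mat_tensor A B) v)
    \<le> norm1 (I \<times> J) x * norm1 (I \<times> J) (matapp (I \<times> J) (I \<times> J) (mat_tensor A B) z0)"
proof -
  let ?L = "matapp (I \<times> J) (I \<times> J) (mat_tensor A B)"
  note dual_pos = min_tensor_pairing_positive_dual_nonneg[OF A B GH Q]
  have "c * r * norm1 (I \<times> J) (?L v) \<le> pairing (I \<times> J) x (?L z0)"
  proof (rule norm1_direction_bound[OF x c])
    fix s assume "s \<in> min_tensor G H"
    from dual_pos[OF pm(1) this] dual_pos[OF pm(2) this]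
    show "0 \<le> pairing (I \<times> J) s (\<lambda>i. ?L z0 i + c * ?L v i)"
      and "0 \<le> pairing (I \<times> J) s (\<lambda>i. ?L z0 i + (- c) * ?L v i)"
      unfolding matapp_add matapp_scale by simp_all
  qed
  also have "\<dots> \<le> norm1 (I \<times> J) x * norm1 (I \<times> J) (?L z0)"
    using abs_pairing_le[of "I \<times> J" x "norm1 (I \<times> J) x" "?L z0"] abs_le_norm1[of "I \<times> J" _ x] fin
    by auto
  finally show ?thesis .
qed

text \<open>Take z on the segment from an inner point of P to y, just past the last point z0 of P.
  Then \<langle>z, (A \<otimes> B) z0\<rangle> dominates the norm of (A \<otimes> B) z0, and the error
  \<langle>z, (A \<otimes> B) (z - z0)\<rangle> is a small multiple of it, uniformly in A and B.\<close>

lemma exists_self_positive_point: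
  fixes n m :: nat and G H :: "(nat \<Rightarrow> real) set" and P Q :: "(nat \<times> nat \<Rightarrow> real) set"
  defines "IJ \<equiv> {..<n} \<times> {..<m}"
  assumes G: "proper_cone {..<n} G" and H: "proper_cone {..<m} H"
    and P: "closed P" "wedge P" "min_tensor G H \<subseteq> P" "P \<subseteq> dual_cone IJ Q"
    and Q: "min_tensor (dual_cone {..<n} G) (dual_cone {..<m} H) \<subseteq> Q"
    and PQ: "\<And>A B. positive_map {..<n} {..<n} A G (dual_cone {..<n} G) \<Longrightarrow>
      positive_map {..<m} {..<m} B H (dual_cone {..<m} H) \<Longrightarrow> positive_map IJ IJ (mat_tensor A B) P Q"
    and y: "y \<in> dual_cone IJ Q" "y \<notin> P"
  obtains z where "z \<in> dual_cone IJ Q" "z \<notin> P"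
    "\<And>A B. positive_map {..<n} {..<n} A G (dual_cone {..<n} G) \<Longrightarrow>
      positive_map {..<m} {..<m} B H (dual_cone {..<m} H) \<Longrightarrow> 0 \<le> pairing IJ z (matapp IJ IJ (mat_tensor A B) z)"
proof -
  have finIJ: "finite IJ" by (simp add: IJ_def)
  obtain x r where x: "x \<in> min_tensor G H" "r > 0" "cube IJ x r \<subseteq> min_tensor G H"
    using min_tensor_interior[OF _ _ G H] unfolding IJ_def by blast
  have xsp: "x \<in> space IJ"
    using x(1) min_tensor_subset_space[OF proper_coneD(1)[OF G] proper_coneD(1)[OF H]] by (auto simp: IJ_def)
  have ysp: "y \<in> space IJ" using y(1) by (auto simp: dual_cone_def)
  obtain z0 \<rho> \<delta> v where z0: "z0 \<in> P" and pos: "\<rho> > 0" "\<delta> > 0" and vsp: "v \<in> space IJ"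
    and outside: "\<And>e. 0 < e \<Longrightarrow> e \<le> \<delta> \<Longrightarrow> (\<lambda>i. z0 i + e * v i) \<notin> P"
    and cube: "\<And>e. 0 \<le> e \<Longrightarrow> e \<le> \<delta> \<Longrightarrow> cube IJ (\<lambda>i. z0 i + e * v i) \<rho> \<subseteq> dual_cone IJ Q"
    and bound: "\<And>e i. 0 \<le> e \<Longrightarrow> e \<le> \<delta> \<Longrightarrow> \<bar>z0 i + e * v i\<bar> \<le> \<bar>x i\<bar> + \<bar>y i\<bar>"
    by (rule boundary_crossing[OF P(1,4) xsp subset_trans[OF x(3) P(3)] x(2) wedge_dual_cone ysp y]) blast
  have z0sp: "z0 \<in> space IJ" using z0 P(4) by (auto simp: dual_cone_def)
  obtain c where c: "c > 0" and segment: "\<And>s. \<bar>s\<bar> \<le> c \<Longrightarrow> (\<lambda>i. z0 i + s * v i) \<in> cube IJ z0 \<rho>"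
    using exists_segment_in_cube[OF finIJ z0sp vsp pos(1)] by blast
  have "cube IJ z0 \<rho> \<subseteq> dual_cone IJ Q" using cube[of 0] pos by simp
  then have pm: "(\<lambda>i. z0 i + c * v i) \<in> dual_cone IJ Q" "(\<lambda>i. z0 i + (- c) * v i) \<in> dual_cone IJ Q"
    using segment[of c] segment[of "- c"] c by auto
  define Zb where "Zb = norm1 IJ x + norm1 IJ y"
  define W where "W = norm1 IJ x"
  define e where "e = min \<delta> (\<rho> * (c * r) / (Zb * W + 1))"
  define z where "z = (\<lambda>i. z0 i + e * v i)"
  have ZbW: "Zb \<ge> 0" "W \<ge> 0" "Zb * W + 1 > 0"
    by (simp_all add: Zb_def W_def norm1_nonneg add_nonneg_pos)
  then have e: "0 < e" "e \<le> \<delta>" "e * (Zb * W) \<le> \<rho> * (c * r)"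
    using pos c x(2) by (auto simp: e_def min_def field_simps mult_le_cancel_left pos_le_divide_eq)
  have zcube: "cube IJ z \<rho> \<subseteq> dual_cone IJ Q" using cube e by (simp add: z_def)
  have "z \<in> space IJ" using z0sp vsp by (auto simp: z_def space_def)
  then have "z \<in> cube IJ z \<rho>" using pos by (intro cube_memI) auto
  then have zQ: "z \<in> dual_cone IJ Q" using zcube by blast
  have "0 \<le> pairing IJ z (matapp IJ IJ (mat_tensor A B) z)"
    if A: "positive_map {..<n} {..<n} A G (dual_cone {..<n} G)"
      and B: "positive_map {..<m} {..<m} B H (dual_cone {..<m} H)" for A B
  proof (rule self_pairing_nonneg[OF \<open>z \<in> space IJ\<close> zcube _ z_def])
    show "c * r * norm1 IJ (matapp IJ IJ (mat_tensor A B) v) \<le> W * norm1 IJ (matapp IJ IJ (mat_tensor A B) z0)"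
      unfolding W_def IJ_def using x(2)
      by (intro positive_dual_direction_bound[OF _ _ A B proper_coneD(1)[OF G] proper_coneD(1)[OF H] Q _ _ _ c])
        (use xsp x(3) pm in \<open>auto simp: IJ_def\<close>)
    have "matapp IJ IJ (mat_tensor A B) z0 \<in> Q" using PQ[OF A B] z0 by (auto simp: positive_map_def)
    then show "0 \<le> pairing IJ s (matapp IJ IJ (mat_tensor A B) z0)" if "s \<in> dual_cone IJ Q" for s
      using that by (auto simp: dual_cone_def)
    show "\<bar>z i\<bar> \<le> Zb" if "i \<in> IJ" for i
      using bound[OF _ e(2), of i] e(1) abs_le_norm1[OF finIJ that, of x] abs_le_norm1[OF finIJ that, of y]
      by (auto simp: z_def Zb_def)
  qed (use e pos c x(2) ZbW in \<open>auto simp: mult.assoc\<close>)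
  moreover have "z \<notin> P" unfolding z_def using outside e by blast
  ultimately show thesis using that zQ by blast
qed

lemma maximal_admissible_self_dual:
  assumes T: "admissible T" and max: "\<And>T'. admissible T' \<Longrightarrow> T \<subseteq> T' \<Longrightarrow> T' = T"
    and G: "proper_cone {..<n} G" and H: "proper_cone {..<m} H"
  shows "fibre T n m G H
    = dual_cone ({..<n} \<times> {..<m}) (fibre T n m (dual_cone {..<n} G) (dual_cone {..<m} H))"
proof
  let ?IJ = "{..<n} \<times> {..<m}" and ?Q = "fibre T n m (dual_cone {..<n} G) (dual_cone {..<m} H)"
  note dG = dual_cone_proper[OF finite_lessThan G] and dH = dual_cone_proper[OF finite_lessThan H]
  show PQ: "fibre T n m G H \<subseteq> dual_cone ?IJ ?Q"
    using admissible_pairing_nonneg[OF T G H] admissible_subset_space[OF T G H]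
    by (auto simp: dual_cone_def pairing_commute)
  show "dual_cone ?IJ ?Q \<subseteq> fibre T n m G H"
  proof
    fix y assume y: "y \<in> dual_cone ?IJ ?Q"
    show "y \<in> fibre T n m G H"
    proof (rule ccontr)
      assume "y \<notin> fibre T n m G H"
      with exists_self_positive_point[OF G H maximal_admissible_closed[OF T max] admissible_wedge[OF T G H]
          admissible_min_tensor[OF T G H] PQ admissible_min_tensor[OF T dG dH]
          admissible_positive_map[OF T G H dG dH] y]
      obtain z where z: "z \<in> dual_cone ?IJ ?Q" "z \<notin> fibre T n m G H"
        and self: "\<And>A B. positive_map {..<n} {..<n} A G (dual_cone {..<n} G) \<Longrightarrow>
          positive_map {..<m} {..<m} B H (dual_cone {..<m} H) \<Longrightarrow>
          0 \<le> pairing ?IJ z (matapp ?IJ ?IJ (mat_tensor A B) z)"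
        by blast
      have "extend_family T n m G H z = T"
        by (rule max[OF admissible_extend_family[OF T G H z(1) self] subset_extend_family])
      then show False using in_fibre_extend_family[OF T G H z(1) self] z(2) by simp
    qed
  qed
qed

theorem corollary3p3:
  shows "\<exists>T :: nat \<Rightarrow> nat \<Rightarrow> (nat \<Rightarrow> real) set \<Rightarrow> (nat \<Rightarrow> real) set \<Rightarrow> (nat \<times> nat \<Rightarrow> real) set.
    (\<forall>n m G H. proper_cone {..<n} G \<and> proper_cone {..<m} H \<longrightarrow>
        proper_cone ({..<n} \<times> {..<m}) (T n m G H)) \<and>
    (\<forall>n1 m1 n2 m2 G1 H1 G2 H2 M N.
        proper_cone {..<n1} G1 \<and> proper_cone {..<m1} H1 \<and>
        proper_cone {..<n2} G2 \<and> proper_cone {..<m2} H2 \<and>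
        positive_map {..<n1} {..<n2} M G1 G2 \<and> positive_map {..<m1} {..<m2} N H1 H2 \<longrightarrow>
        positive_map ({..<n1} \<times> {..<m1}) ({..<n2} \<times> {..<m2}) (mat_tensor M N)
          (T n1 m1 G1 H1) (T n2 m2 G2 H2)) \<and>
    (\<forall>n m G H. proper_cone {..<n} G \<and> proper_cone {..<m} H \<longrightarrow>
        dual_cone ({..<n} \<times> {..<m}) (T n m G H)
          = T n m (dual_cone {..<n} G) (dual_cone {..<m} H)) \<and>
    (\<forall>n m G H. proper_cone {..<n} G \<and> proper_cone {..<m} H \<longrightarrow>
        min_tensor G H \<subseteq> T n m G H \<and> T n m G H \<subseteq> max_tensor {..<n} {..<m} G H)"
proof -
  obtain T where T: "admissible T" and max: "\<And>T'. admissible T' \<Longrightarrow> T \<subseteq> T' \<Longrightarrow> T' = T"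
    using exists_maximal_admissible by blast
  have self_dual: "dual_cone ({..<n} \<times> {..<m}) (fibre T n m G H)
      = fibre T n m (dual_cone {..<n} G) (dual_cone {..<m} H)"
    if G: "proper_cone {..<n} G" and H: "proper_cone {..<m} H" for n m G H
    using maximal_admissible_self_dual[OF T max dual_cone_proper[OF _ G] dual_cone_proper[OF _ H]]
    by (simp add: dual_dual_cone_proper[OF _ G] dual_dual_cone_proper[OF _ H])
  have proper: "proper_cone ({..<n} \<times> {..<m}) (fibre T n m G H)"
    if G: "proper_cone {..<n} G" and H: "proper_cone {..<m} H" for n m G H
    by (rule proper_cone_between_min_max[OF _ _ G H maximal_admissible_closed[OF T max]
          admissible_wedge[OF T G H] admissible_min_tensor[OF T G H] admissible_subset_max_tensor[OF T G H]])
      simp_all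
  show ?thesis
    by (intro exI[of _ "fibre T"] conjI allI impI)
      (simp_all add: proper self_dual admissible_positive_map[OF T] admissible_min_tensor[OF T]
        admissible_subset_max_tensor[OF T])
qed

end
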